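(* Let $0<\alpha<\gamma<1$, $f\in C^1[0,1]$ with $f(0)=0$, $h=\dot f$, $D\in C^1[0,1]$ with $D>0$ on $(0,\alpha)$ and $D<0$ on $(\alpha,1)$, $g\in C^0[0,1]$ with $g<0$ on $(0,\gamma)$, $g>0$ on $(\gamma,1)$, $g(0)=g(\gamma)=g(1)=0$, $q=Dg$. For $c\in\mathbb R$ consider problem (P3): find $z\in C^0[\alpha,1]\cap C^1(\alpha,1)$ with $\dot z=h-c-q/z$ and $z>0$ on $(\alpha,1)$, $z(\alpha)=z(1)=0$. If $c^*_{3.2}<c^*_{3.1}$ and $c^*_{3.2}<c<c^*_{3.1}$, then (P3) has solutions; more precisely, with $\beta(c):=\min\{\beta_1(c),\beta_2(c)\}$, for every $s\in(0,\beta(c)]$ there is a solution $z_s$ of (P3) with $z_s(\gamma)=s$, giving a one-parameter family $\{z_s:s\in(0,\beta(c)]\}$ of solutions. Conversely, if (P3) has a solution for some $c$, then $c^*_{3.2}\le c^*_{3.1}$ and $c^*_{3.2}\le c\le c^*_{3.1}$.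
   Context: Threshold $c^*$: for $\sigma_1<\sigma_2$ and $H,Q$ continuous on $[\sigma_1,\sigma_2]$ with $Q>0$ on $(\sigma_1,\sigma_2)$, $Q(\sigma_1)=Q(\sigma_2)=0$, and every $c$, let $\zeta_c\in C^0[\sigma_1,\sigma_2]\cap C^1(\sigma_1,\sigma_2)$ be the unique function with $\dot\zeta_c=H-c-Q/\zeta_c$, $\zeta_c<0$ on $(\sigma_1,\sigma_2)$, $\zeta_c(\sigma_2)=0$; $c^*(Q;H;\sigma_1,\sigma_2):=\sup\{c:\zeta_c(\sigma_1)<0\}\in(-\infty,\infty]$. With $\tilde q(\phi)=-q(1-\phi)$ and $\bar h(\phi)=h(1-\phi)$: $c^*_{3.1}:=-c^*(q;-h;\alpha,\gamma)$, $c^*_{3.2}:=c^*(\tilde q;\bar h;0,1-\gamma)$. For $c^*_{3.2}<c<c^*_{3.1}$: the set of values $z_1(\gamma)$ over solutions $z_1\in C^0[\alpha,\gamma]\cap C^1(\alpha,\gamma)$ of $\dot z_1=h-c-q/z_1$, $z_1>0$ on $(\alpha,\gamma)$, $z_1(\alpha)=0$ is an interval $(0,\beta_1(c)]$ with $\beta_1(c)>0$ (each value attained by exactly one solution); likewise the set of values $z_2(\gamma)$ over solutions $z_2\in C^0[\gamma,1]\cap C^1(\gamma,1)$ of $\dot z_2=h-c-q/z_2$, $z_2>0$ on $(\gamma,1)$, $z_2(1)=0$ is an interval $(0,\beta_2(c)]$ with $\beta_2(c)>0$. *)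

theory Defs
  imports "HOL-Analysis.Analysis"
begin

definition C1_on :: "real set \<Rightarrow> (real \<Rightarrow> real) \<Rightarrow> bool" where
  "C1_on S z \<longleftrightarrow> (\<forall>x\<in>S. z differentiable (at x)) \<and> continuous_on S (deriv z)"

definition zeta_sol :: "(real \<Rightarrow> real) \<Rightarrow> (real \<Rightarrow> real) \<Rightarrow> real \<Rightarrow> real \<Rightarrow> real \<Rightarrow> (real \<Rightarrow> real) \<Rightarrow> bool" where
  "zeta_sol Q H s1 s2 c \<zeta> \<longleftrightarrow>
     continuous_on {s1..s2} \<zeta> \<and> C1_on {s1<..<s2} \<zeta> \<and>
     (\<forall>x\<in>{s1<..<s2}. deriv \<zeta> x = H x - c - Q x / \<zeta> x \<and> \<zeta> x < 0) \<and> \<zeta> s2 = 0"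

text \<open>Threshold c*(Q;H;s1,s2) = sup {c. zeta_c(s1) < 0}, valued in the extended reals.
  (zeta_c is unique by the standing context, so "the solution" = "some solution".)\<close>
definition cstar :: "(real \<Rightarrow> real) \<Rightarrow> (real \<Rightarrow> real) \<Rightarrow> real \<Rightarrow> real \<Rightarrow> ereal" where
  "cstar Q H s1 s2 = Sup {ereal c | c. \<exists>\<zeta>. zeta_sol Q H s1 s2 c \<zeta> \<and> \<zeta> s1 < 0}"

definition cstar31 :: "(real \<Rightarrow> real) \<Rightarrow> (real \<Rightarrow> real) \<Rightarrow> real \<Rightarrow> real \<Rightarrow> ereal" where
  "cstar31 q h \<alpha> \<gamma> = - cstar q (\<lambda>x. - h x) \<alpha> \<gamma>"

definition cstar32 :: "(real \<Rightarrow> real) \<Rightarrow> (real \<Rightarrow> real) \<Rightarrow> real \<Rightarrow> ereal" where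
  "cstar32 q h \<gamma> = cstar (\<lambda>\<phi>. - q (1 - \<phi>)) (\<lambda>\<phi>. h (1 - \<phi>)) 0 (1 - \<gamma>)"

definition pos_sol_on :: "(real \<Rightarrow> real) \<Rightarrow> (real \<Rightarrow> real) \<Rightarrow> real \<Rightarrow> real \<Rightarrow> real \<Rightarrow> (real \<Rightarrow> real) \<Rightarrow> bool" where
  "pos_sol_on q h c a b z \<longleftrightarrow>
     continuous_on {a..b} z \<and> C1_on {a<..<b} z \<and>
     (\<forall>x\<in>{a<..<b}. deriv z x = h x - c - q x / z x \<and> z x > 0)"

definition P3 :: "(real \<Rightarrow> real) \<Rightarrow> (real \<Rightarrow> real) \<Rightarrow> real \<Rightarrow> real \<Rightarrow> (real \<Rightarrow> real) \<Rightarrow> bool" where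
  "P3 q h \<alpha> c z \<longleftrightarrow> pos_sol_on q h c \<alpha> 1 z \<and> z \<alpha> = 0 \<and> z 1 = 0"

definition beta1 :: "(real \<Rightarrow> real) \<Rightarrow> (real \<Rightarrow> real) \<Rightarrow> real \<Rightarrow> real \<Rightarrow> real \<Rightarrow> real" where
  "beta1 q h \<alpha> \<gamma> c = Sup {z \<gamma> | z. pos_sol_on q h c \<alpha> \<gamma> z \<and> z \<alpha> = 0}"

definition beta2 :: "(real \<Rightarrow> real) \<Rightarrow> (real \<Rightarrow> real) \<Rightarrow> real \<Rightarrow> real \<Rightarrow> real" where
  "beta2 q h \<gamma> c = Sup {z \<gamma> | z. pos_sol_on q h c \<gamma> 1 z \<and> z 1 = 0}"

end

(*
  On [\<alpha>, \<gamma>] the weight q is positive and on [\<gamma>, 1] it is negative, so (P3) splits at \<gamma>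
  into two problems of the same type z' = H - C - Q / z with Q > 0 inside the interval: one on
  [\<alpha>, \<gamma>], and one on [0, 1 - \<gamma>] after the reflection \<phi> = 1 - x.  A solution of (P3) is a pair
  of solutions of these with a common positive value at \<gamma>.

  For one such problem on [a, b], solutions with z(a) = 0 are compared through their terminal
  values z(b).  If C lies below the threshold - c*(Q; - H; a, b), the solution with z(b) = 0 for a
  slightly larger constant vanishes at a, and solutions with small terminal values lie below it, so
  the terminal values of solutions with z(a) = 0 fill an interval (0, \<beta>].  Conversely, a solution
  with z(a) = 0 < z(b) stays above every - \<zeta> with \<zeta>(a) < 0 whose constant is larger, which bounds C
  by the threshold.  Solutions with a prescribed terminal value are obtained by backward Picard
  iteration for a truncated right-hand side, together with lower bounds away from a.
*)

theory Submission
  imports Defs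
begin

section \<open>Uniform limits and backward Picard iteration\<close>

lemma uniform_limit_of_Cauchy_bound:
  fixes Y :: "nat \<Rightarrow> 'a \<Rightarrow> real"
  assumes bound: "\<And>n m x. n \<le> m \<Longrightarrow> x \<in> S \<Longrightarrow> \<bar>Y m x - Y n x\<bar> \<le> e n"
    and e: "e \<longlonglongrightarrow> 0"
  shows "\<exists>y. uniform_limit S Y y sequentially \<and> (\<forall>n. \<forall>x\<in>S. \<bar>Y n x - y x\<bar> \<le> e n)"
proof -
  have "uniformly_Cauchy_on S Y"
  proof (rule uniformly_Cauchy_onI')
    fix \<epsilon> :: real assume "0 < \<epsilon>"
    then obtain M where "\<forall>n\<ge>M. \<bar>e n\<bar> < \<epsilon>"
      using e unfolding LIMSEQ_iff by auto
    then show "\<exists>M. \<forall>x\<in>S. \<forall>m\<ge>M. \<forall>n>m. dist (Y m x) (Y n x) < \<epsilon>"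
    proof (intro exI ballI allI impI)
      fix x m n assume "\<forall>n\<ge>M. \<bar>e n\<bar> < \<epsilon>" "x \<in> S" "M \<le> m" "m < n"
      then have "\<bar>Y n x - Y m x\<bar> \<le> e m" "\<bar>e m\<bar> < \<epsilon>"
        using bound by auto
      moreover have "dist (Y m x) (Y n x) = \<bar>Y n x - Y m x\<bar>"
        by (simp add: dist_real_def abs_minus_commute)
      ultimately show "dist (Y m x) (Y n x) < \<epsilon>"
        by linarith
    qed
  qed
  then obtain y where ul: "uniform_limit S Y y sequentially"
    using Cauchy_uniformly_convergent uniformly_convergent_on_def by blast
  have "\<bar>Y n x - y x\<bar> \<le> e n" if "x \<in> S" for n x
  proof -
    have "(\<lambda>m. \<bar>Y m x - Y n x\<bar>) \<longlonglongrightarrow> \<bar>y x - Y n x\<bar>"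
      using tendsto_uniform_limitI[OF ul that] by (intro tendsto_intros)
    moreover have "\<forall>\<^sub>F m in sequentially. \<bar>Y m x - Y n x\<bar> \<le> e n"
      using bound that by (auto simp: eventually_sequentially)
    ultimately have "\<bar>y x - Y n x\<bar> \<le> e n"
      by (rule tendsto_upperbound) simp
    then show ?thesis
      by (simp add: abs_minus_commute)
  qed
  with ul show ?thesis
    by blast
qed

lemma uniform_limit_of_geometric_steps:
  fixes Y :: "nat \<Rightarrow> 'a \<Rightarrow> real"
  assumes step: "\<And>n x. x \<in> S \<Longrightarrow> \<bar>Y (Suc n) x - Y n x\<bar> \<le> B / 2^n"
  shows "\<exists>y. uniform_limit S Y y sequentially \<and> (\<forall>n. \<forall>x\<in>S. \<bar>Y n x - y x\<bar> \<le> 2 * B / 2^n)"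
proof (rule uniform_limit_of_Cauchy_bound)
  fix n m :: nat and x assume "n \<le> m" and x: "x \<in> S"
  have partial: "\<bar>Y (n + k) x - Y n x\<bar> \<le> 2 * B / 2^n - 2 * B / 2^(n+k)" for k
  proof (induction k)
    case (Suc k)
    have "\<bar>Y (n + Suc k) x - Y n x\<bar> \<le> \<bar>Y (Suc (n+k)) x - Y (n+k) x\<bar> + \<bar>Y (n+k) x - Y n x\<bar>"
      by simp
    also have "\<dots> \<le> B / 2^(n+k) + (2 * B / 2^n - 2 * B / 2^(n+k))"
      using step[OF x] Suc by (rule add_mono)
    also have "\<dots> = 2 * B / 2^n - 2 * B / 2^(n + Suc k)"
      by (simp add: field_simps)
    finally show ?case .
  qed simp
  obtain k where "m = n + k"
    using \<open>n \<le> m\<close> le_Suc_ex by blast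
  moreover have "0 \<le> 2 * B / 2^(n+k)"
    using step[OF x, of 0] by simp
  then have "\<bar>Y (n + k) x - Y n x\<bar> \<le> 2 * B / 2^n"
    using partial[of k] by linarith
  ultimately show "\<bar>Y m x - Y n x\<bar> \<le> 2 * B / 2^n"
    by simp
next
  show "(\<lambda>n. 2 * B / 2^n) \<longlonglongrightarrow> 0"
    by (rule LIMSEQ_divide_realpow_zero) simp
qed

lemma integral_exp_weight:
  fixes L B x r :: real
  assumes "x \<le> r" "0 < L"
  shows "integral {x..r} (\<lambda>t. L * B * exp (2*L*(r-t))) = B/2 * (exp (2*L*(r-x)) - 1)"
proof -
  have "((\<lambda>t. L * B * exp (2*L*(r-t))) has_integral
        (- (B/2) * exp (2*L*(r-r))) - (- (B/2) * exp (2*L*(r-x)))) {x..r}"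
  proof (rule fundamental_theorem_of_calculus[OF assms(1)])
    fix t assume "t \<in> {x..r}"
    have "((\<lambda>t. - (B/2) * exp (2*L*(r-t))) has_real_derivative L * B * exp (2*L*(r-t)))
          (at t within {x..r})"
      by (rule derivative_eq_intros refl | simp add: field_simps)+
    then show "((\<lambda>t. - (B/2) * exp (2*L*(r-t))) has_vector_derivative L * B * exp (2*L*(r-t)))
               (at t within {x..r})"
      by (simp only: has_real_derivative_iff_has_vector_derivative)
  qed
  then have "integral {x..r} (\<lambda>t. L * B * exp (2*L*(r-t)))
             = - (B/2) * exp (2*L*(r-r)) - (- (B/2) * exp (2*L*(r-x)))"
    by (rule integral_unique)
  then show ?thesis
    by (simp add: algebra_simps)
qed

text \<open>The weight \<open>exp (2 L (r - t))\<close> makes the backward Picard operator a contraction with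
  constant \<open>1/2\<close>, whatever the length of the interval.\<close>

lemma integral_Lipschitz_weighted_bound:
  fixes G :: "real \<Rightarrow> real \<Rightarrow> real"
  assumes Lip: "\<And>t u v. t \<in> {x..r} \<Longrightarrow> \<bar>G t u - G t v\<bar> \<le> L * \<bar>u - v\<bar>"
    and "0 < L" "x \<le> r" "0 \<le> B"
    and int1: "(\<lambda>t. G t (y1 t)) integrable_on {x..r}"
    and int2: "(\<lambda>t. G t (y2 t)) integrable_on {x..r}"
    and close: "\<And>t. t \<in> {x..r} \<Longrightarrow> \<bar>y1 t - y2 t\<bar> \<le> B * exp (2*L*(r-t))"
  shows "\<bar>integral {x..r} (\<lambda>t. G t (y1 t)) - integral {x..r} (\<lambda>t. G t (y2 t))\<bar>
           \<le> B/2 * exp (2*L*(r-x))"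
proof -
  have "norm (integral {x..r} (\<lambda>t. G t (y1 t) - G t (y2 t)))
          \<le> integral {x..r} (\<lambda>t. L * B * exp (2*L*(r-t)))"
  proof (rule integral_norm_bound_integral)
    show "(\<lambda>t. G t (y1 t) - G t (y2 t)) integrable_on {x..r}"
      using int1 int2 by (rule integrable_diff)
    show "(\<lambda>t. L * B * exp (2*L*(r-t))) integrable_on {x..r}"
      by (intro integrable_continuous_interval continuous_intros)
    fix t assume t: "t \<in> {x..r}"
    have "\<bar>G t (y1 t) - G t (y2 t)\<bar> \<le> L * \<bar>y1 t - y2 t\<bar>"
      using Lip[OF t] .
    also have "\<dots> \<le> L * (B * exp (2*L*(r-t)))"
      using close[OF t] \<open>0 < L\<close> by (intro mult_left_mono) auto
    finally show "norm (G t (y1 t) - G t (y2 t)) \<le> L * B * exp (2*L*(r-t))"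
      by simp
  qed
  also have "\<dots> = B/2 * (exp (2*L*(r-x)) - 1)"
    by (rule integral_exp_weight[OF \<open>x \<le> r\<close> \<open>0 < L\<close>])
  also have "\<dots> \<le> B/2 * exp (2*L*(r-x))"
    using \<open>0 \<le> B\<close> by (simp add: mult_left_mono)
  finally show ?thesis
    using integral_diff[OF int1 int2] by simp
qed

lemma continuous_on_compose_graph:
  fixes G :: "real \<Rightarrow> real \<Rightarrow> real"
  assumes "continuous_on (S \<times> UNIV) (\<lambda>xy. G (fst xy) (snd xy))" and "continuous_on S y"
  shows "continuous_on S (\<lambda>t. G t (y t))"
proof -
  have "continuous_on S (\<lambda>t. (t, y t))"
    by (intro continuous_intros assms(2))
  then show ?thesis
    using continuous_on_compose2[OF assms(1), of S "\<lambda>t. (t, y t)"] by auto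
qed

lemma weighted_contraction_has_fixpoint:
  fixes T :: "(real \<Rightarrow> real) \<Rightarrow> real \<Rightarrow> real" and y0 :: "real \<Rightarrow> real"
  assumes "0 < L"
    and T_cont: "\<And>y. continuous_on {p..r} y \<Longrightarrow> continuous_on {p..r} (T y)"
    and T_contract: "\<And>y1 y2 x B. continuous_on {p..r} y1 \<Longrightarrow> continuous_on {p..r} y2 \<Longrightarrow>
      x \<in> {p..r} \<Longrightarrow> 0 \<le> B \<Longrightarrow> (\<And>t. t \<in> {p..r} \<Longrightarrow> \<bar>y1 t - y2 t\<bar> \<le> B * exp (2*L*(r-t))) \<Longrightarrow>
      \<bar>T y1 x - T y2 x\<bar> \<le> B/2 * exp (2*L*(r-x))"
    and y0_cont: "continuous_on {p..r} y0"
  shows "\<exists>y. continuous_on {p..r} y \<and> (\<forall>x\<in>{p..r}. T y x = y x)"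
proof -
  define Y where "Y n = (T ^^ n) y0" for n
  have Y_Suc: "Y (Suc n) = T (Y n)" for n
    by (simp add: Y_def)
  have Y_cont: "continuous_on {p..r} (Y n)" for n
    by (induction n) (auto simp: Y_def T_cont y0_cont)
  obtain M where M: "\<forall>x\<in>{p..r}. \<bar>T y0 x - y0 x\<bar> \<le> M"
    using compact_imp_bounded[OF compact_continuous_image[OF
        continuous_on_diff[OF T_cont[OF y0_cont] y0_cont] compact_Icc]]
    by (force simp: bounded_iff)
  define B0 where "B0 = \<bar>M\<bar>"
  have "0 \<le> B0"
    by (simp add: B0_def)
  have step_weighted: "\<bar>Y (Suc n) x - Y n x\<bar> \<le> B0 / 2^n * exp (2*L*(r-x))" if "x \<in> {p..r}" for n x
    using that
  proof (induction n arbitrary: x)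
    case 0
    have "\<bar>T y0 x - y0 x\<bar> \<le> B0"
      using M 0 by (force simp: B0_def)
    also have "\<dots> \<le> B0 * exp (2*L*(r-x))"
      using \<open>0 \<le> B0\<close> 0 \<open>0 < L\<close> by (simp add: mult_le_cancel_left1)
    finally show ?case
      by (simp add: Y_def)
  next
    case (Suc n)
    have "\<bar>T (Y (Suc n)) x - T (Y n) x\<bar> \<le> (B0 / 2^n)/2 * exp (2*L*(r-x))"
      using Suc \<open>0 \<le> B0\<close> by (intro T_contract Y_cont) auto
    then show ?case
      by (simp add: Y_Suc)
  qed
  define E where "E = exp (2*L*(r-p))"
  have "\<bar>Y (Suc n) x - Y n x\<bar> \<le> B0 * E / 2^n" if "x \<in> {p..r}" for n x
  proof -
    have "B0 / 2^n * exp (2*L*(r-x)) \<le> B0 / 2^n * E"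
      using that \<open>0 < L\<close> \<open>0 \<le> B0\<close> by (intro mult_left_mono) (auto simp: E_def)
    then show ?thesis
      using step_weighted[OF that, of n] by simp
  qed
  then obtain y where Y_lim: "uniform_limit {p..r} Y y sequentially"
    and Y_close: "\<And>n x. x \<in> {p..r} \<Longrightarrow> \<bar>Y n x - y x\<bar> \<le> 2 * (B0 * E) / 2^n"
    using uniform_limit_of_geometric_steps[of "{p..r}" Y "B0 * E"] by blast
  have y_cont: "continuous_on {p..r} y"
    by (rule uniform_limit_theorem[OF _ Y_lim]) (auto simp: Y_cont)
  have "T y x = y x" if x: "x \<in> {p..r}" for x
  proof (rule LIMSEQ_unique)
    show "(\<lambda>n. Y (Suc n) x) \<longlonglongrightarrow> y x"
      using tendsto_uniform_limitI[OF Y_lim x] by (rule LIMSEQ_Suc)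
    have close: "\<bar>Y (Suc n) x - T y x\<bar> \<le> (2 * (B0 * E) / 2^n)/2 * exp (2*L*(r-x))" for n
    proof -
      have "\<bar>Y n t - y t\<bar> \<le> 2 * (B0 * E) / 2^n * exp (2*L*(r-t))" if "t \<in> {p..r}" for t
      proof -
        have "0 \<le> 2 * (B0 * E) / 2^n"
          using \<open>0 \<le> B0\<close> by (simp add: E_def)
        moreover have "1 \<le> exp (2*L*(r-t))"
          using that \<open>0 < L\<close> by simp
        ultimately have "2 * (B0 * E) / 2^n * 1 \<le> 2 * (B0 * E) / 2^n * exp (2*L*(r-t))"
          by (intro mult_left_mono)
        then show ?thesis
          using Y_close[OF that, of n] by linarith
      qed
      then have "\<bar>T (Y n) x - T y x\<bar> \<le> (2 * (B0 * E) / 2^n)/2 * exp (2*L*(r-x))"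
        using \<open>0 \<le> B0\<close> by (intro T_contract Y_cont y_cont x) (auto simp: E_def)
      then show ?thesis
        by (simp add: Y_Suc)
    qed
    have "(\<lambda>n. Y (Suc n) x - T y x) \<longlonglongrightarrow> 0"
    proof (rule Lim_null_comparison)
      show "\<forall>\<^sub>F n in sequentially. norm (Y (Suc n) x - T y x)
              \<le> (2 * (B0 * E) / 2^n)/2 * exp (2*L*(r-x))"
        using close by (simp add: always_eventually)
      show "(\<lambda>n. (2 * (B0 * E) / 2^n)/2 * exp (2*L*(r-x))) \<longlonglongrightarrow> 0"
        using LIMSEQ_divide_realpow_zero[of 2 "B0 * E * exp (2*L*(r-x))"] by simp
    qed
    then show "(\<lambda>n. Y (Suc n) x) \<longlonglongrightarrow> T y x"
      by (simp add: LIM_zero_iff)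
  qed
  with y_cont show ?thesis
    by blast
qed

lemma picard_backward:
  fixes G :: "real \<Rightarrow> real \<Rightarrow> real"
  assumes "p < r" and G_cont: "continuous_on ({p..r} \<times> UNIV) (\<lambda>xy. G (fst xy) (snd xy))"
    and "0 < L" and Lip: "\<And>x u v. x \<in> {p..r} \<Longrightarrow> \<bar>G x u - G x v\<bar> \<le> L * \<bar>u - v\<bar>"
  shows "\<exists>y. continuous_on {p..r} y \<and> y r = y0 \<and>
           (\<forall>x\<in>{p..r}. (y has_real_derivative G x (y x)) (at x within {p..r}))"
proof -
  define T where "T y x = y0 - integral {x..r} (\<lambda>t. G t (y t))" for y :: "real \<Rightarrow> real" and x
  have G_comp: "continuous_on {p..r} (\<lambda>t. G t (y t))" if "continuous_on {p..r} y" for y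
    using continuous_on_compose_graph[OF G_cont that] .
  have G_int: "(\<lambda>t. G t (y t)) integrable_on {x..r}" if "continuous_on {p..r} y" "x \<in> {p..r}" for y x
    using that by (intro integrable_continuous_interval continuous_on_subset[OF G_comp]) auto
  have "continuous_on {p..r} (T y)" if "continuous_on {p..r} y" for y
    unfolding T_def
    by (intro continuous_intros indefinite_integral_continuous_1' integrable_continuous_interval
        G_comp that)
  moreover have "\<bar>T y1 x - T y2 x\<bar> \<le> B/2 * exp (2*L*(r-x))"
    if "continuous_on {p..r} y1" "continuous_on {p..r} y2" "x \<in> {p..r}" "0 \<le> B"
      and "\<And>t. t \<in> {p..r} \<Longrightarrow> \<bar>y1 t - y2 t\<bar> \<le> B * exp (2*L*(r-t))" for y1 y2 x B
    using integral_Lipschitz_weighted_bound[of x r G L B y1 y2] Lip G_int that \<open>0 < L\<close>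
    by (simp add: T_def abs_minus_commute)
  moreover have "continuous_on {p..r} (\<lambda>_. y0)"
    by (rule continuous_on_const)
  ultimately obtain y where y_cont: "continuous_on {p..r} y" and fixpoint: "\<forall>x\<in>{p..r}. T y x = y x"
    using weighted_contraction_has_fixpoint[OF \<open>0 < L\<close>, of p r T "\<lambda>_. y0"] by blast
  have "(y has_real_derivative G x (y x)) (at x within {p..r})" if x: "x \<in> {p..r}" for x
  proof -
    have "((\<lambda>x. integral {x..r} (\<lambda>t. G t (y t))) has_real_derivative - G x (y x))
            (at x within {p..r})"
      by (rule integral_has_real_derivative'[OF G_comp[OF y_cont] x])
    from DERIV_diff[OF DERIV_const[of y0] this]
    have "(T y has_real_derivative G x (y x)) (at x within {p..r})"
      by (simp add: T_def[abs_def])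
    then show ?thesis
      by (rule has_field_derivative_transform_within[where d=1]) (use x fixpoint in auto)
  qed
  moreover have "y r = y0"
    using bspec[OF fixpoint, of r] \<open>p < r\<close> by (simp add: T_def)
  ultimately show ?thesis
    using y_cont by blast
qed

section \<open>Sublevel invariance and one-sided derivatives\<close>

text \<open>If \<open>v\<close> first reached \<open>\<theta>\<close> at some point, \<open>u\<close> would not have increased before it, so
  \<open>trapped\<close> would be violated there.\<close>

lemma sublevel_invariant:
  fixes u v u' :: "real \<Rightarrow> real"
  assumes "p \<le> r" and u_cont: "continuous_on {p..r} u" and v_cont: "continuous_on {p..r} v"
    and u_deriv: "\<And>x. x \<in> {p<..<r} \<Longrightarrow> (u has_real_derivative u' x) (at x)"
    and nonincreasing: "\<And>x. x \<in> {p<..<r} \<Longrightarrow> v x < \<theta> \<Longrightarrow> u' x \<le> 0"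
    and trapped: "\<And>x. x \<in> {p..r} \<Longrightarrow> u x \<le> u p \<Longrightarrow> v x < \<theta>"
  shows "\<forall>x\<in>{p..r}. u x \<le> u p"
proof (rule ballI, rule ccontr)
  fix x assume x: "x \<in> {p..r}" and "\<not> u x \<le> u p"
  have below_start: "u z \<le> u p" if z: "z \<in> {p..x}" and "\<forall>y\<in>{p..<z}. v y < \<theta>" for z
  proof (rule DERIV_nonpos_imp_decreasing_open[of p z u])
    show "continuous_on {p..z} u"
      using continuous_on_subset[OF u_cont] z x by auto
    fix y assume "p < y" "y < z"
    then show "\<exists>d. DERIV u y :> d \<and> d \<le> 0"
      using u_deriv nonincreasing that x by fastforce
  qed (use z in auto)
  define T where "T = {y \<in> {p..x}. \<theta> \<le> v y}"
  show False
  proof (cases "T = {}")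
    case True
    have "\<forall>y\<in>{p..<x}. v y < \<theta>"
    proof
      fix y assume "y \<in> {p..<x}"
      moreover from this have "y \<notin> T"
        using True by auto
      ultimately show "v y < \<theta>"
        by (simp add: T_def)
    qed
    then show False
      using below_start[of x] x \<open>\<not> u x \<le> u p\<close> by auto
  next
    case False
    have "T = {p..x} \<inter> v -` {\<theta>..}"
      by (auto simp: T_def)
    moreover have "closed ({p..x} \<inter> v -` {\<theta>..})"
      using continuous_on_subset[OF v_cont] x by (intro continuous_closed_preimage) auto
    ultimately have "Inf T \<in> T"
      using False by (intro closed_contains_Inf) (auto simp: T_def bdd_below_def)
    moreover have "\<forall>y\<in>{p..<Inf T}. v y < \<theta>"
      using cInf_lower[of _ T] \<open>Inf T \<in> T\<close> by (force simp: T_def bdd_below_def)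
    ultimately have "u (Inf T) \<le> u p"
      using below_start by (auto simp: T_def)
    then show False
      using trapped[of "Inf T"] \<open>Inf T \<in> T\<close> x by (auto simp: T_def)
  qed
qed

lemma sublevel_invariant_strict:
  fixes u u' :: "real \<Rightarrow> real"
  assumes "p \<le> r" and u_cont: "continuous_on {p..r} u"
    and u_deriv: "\<And>x. x \<in> {p..<r} \<Longrightarrow> (u has_real_derivative u' x) (at x)"
    and decreasing: "\<And>x. x \<in> {p..<r} \<Longrightarrow> P x \<Longrightarrow> u' x < 0"
    and trapped: "\<And>x. x \<in> {p..r} \<Longrightarrow> u x \<le> u p \<Longrightarrow> P x"
  shows "\<forall>x\<in>{p..r}. u x \<le> u p"
proof (rule ballI, rule ccontr)
  fix x assume x: "x \<in> {p..r}" and "\<not> u x \<le> u p"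
  define T where "T = {y \<in> {p..x}. u y \<le> u p}"
  have "T = {p..x} \<inter> u -` {..u p}"
    by (auto simp: T_def)
  moreover have "closed ({p..x} \<inter> u -` {..u p})"
    using continuous_on_subset[OF u_cont] x by (intro continuous_closed_preimage) auto
  ultimately have "Sup T \<in> T"
    using x by (intro closed_contains_Sup) (auto simp: T_def bdd_above_def)
  define x1 where "x1 = Sup T"
  have "x1 \<in> T"
    using \<open>Sup T \<in> T\<close> by (simp add: x1_def)
  then have "x1 < x"
    using \<open>\<not> u x \<le> u p\<close> by (cases "x1 = x") (auto simp: T_def)
  have above: "u p < u y" if "y \<in> {x1<..x}" for y
    using that cSup_upper[of y T] \<open>x1 \<in> T\<close> by (force simp: x1_def T_def bdd_above_def)
  have "x1 \<in> {p..<r}"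
    using \<open>x1 \<in> T\<close> \<open>x1 < x\<close> x by (auto simp: T_def)
  moreover have "P x1"
    using trapped[of x1] \<open>x1 \<in> T\<close> x by (auto simp: T_def)
  ultimately obtain d where "d > 0" and d: "\<And>h. 0 < h \<Longrightarrow> h < d \<Longrightarrow> u (x1 + h) < u x1"
    using DERIV_neg_dec_right[OF u_deriv decreasing] by blast
  define h where "h = min d (x - x1) / 2"
  have "0 < h" "h < d" "x1 + h \<in> {x1<..x}"
    using \<open>d > 0\<close> \<open>x1 < x\<close> by (auto simp: h_def min_def field_simps)
  then show False
    using d[of h] above[of "x1 + h"] \<open>x1 \<in> T\<close> by (auto simp: T_def)
qed

lemma has_real_derivative_at_left_endpoint:
  fixes f f' :: "real \<Rightarrow> real"
  assumes "a < b" and f_cont: "continuous_on {a..b} f"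
    and f_deriv: "\<And>x. x \<in> {a<..<b} \<Longrightarrow> (f has_real_derivative f' x) (at x)"
    and f'_lim: "(f' \<longlongrightarrow> l) (at_left b)"
  shows "(f has_real_derivative l) (at b within {a..b})"
proof -
  have near: "\<forall>\<^sub>F x in at_left b. x \<in> {a<..<b}"
    using eventually_at_left_real[OF \<open>a < b\<close>] .
  have "(f \<longlongrightarrow> f b) (at_left b)"
    using f_cont \<open>a < b\<close> by (auto simp: continuous_on_def at_within_Icc_at_left[symmetric])
  then have "((\<lambda>x. f x - f b) \<longlongrightarrow> 0) (at_left b)"
    by (rule LIM_zero)
  moreover have "((\<lambda>x. x - b) \<longlongrightarrow> 0) (at_left b)"
    by (rule LIM_zero) (rule tendsto_ident_at)
  ultimately have "((\<lambda>x. (f x - f b) / (x - b)) \<longlongrightarrow> l) (at_left b)"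
  proof (rule lhopital_left[where f'=f' and g'="\<lambda>_. 1"])
    show "\<forall>\<^sub>F x in at_left b. x - b \<noteq> 0"
      using near by (rule eventually_mono) simp
    show "\<forall>\<^sub>F x in at_left b. ((\<lambda>x. f x - f b) has_real_derivative f' x) (at x)"
      using near by (rule eventually_mono) (use DERIV_diff[OF f_deriv DERIV_const] in auto)
    show "\<forall>\<^sub>F x in at_left b. ((\<lambda>x. x - b) has_real_derivative 1) (at x)"
      using DERIV_diff[OF DERIV_ident DERIV_const] by (intro always_eventually allI) simp
    show "((\<lambda>x. f' x / 1) \<longlongrightarrow> l) (at_left b)"
      using f'_lim by simp
  qed simp
  then show ?thesis
    unfolding has_field_derivative_iff at_within_Icc_at_left[OF \<open>a < b\<close>] .
qed

lemma has_real_derivative_at_right_endpoint: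
  fixes f f' :: "real \<Rightarrow> real"
  assumes "a < b" and f_cont: "continuous_on {a..b} f"
    and f_deriv: "\<And>x. x \<in> {a<..<b} \<Longrightarrow> (f has_real_derivative f' x) (at x)"
    and f'_lim: "(f' \<longlongrightarrow> l) (at_right a)"
  shows "(f has_real_derivative l) (at a within {a..b})"
proof -
  have near: "\<forall>\<^sub>F x in at_right a. x \<in> {a<..<b}"
    using eventually_at_right_real[OF \<open>a < b\<close>] .
  have "(f \<longlongrightarrow> f a) (at_right a)"
    using f_cont \<open>a < b\<close> by (auto simp: continuous_on_def at_within_Icc_at_right[symmetric])
  then have "((\<lambda>x. f x - f a) \<longlongrightarrow> 0) (at_right a)"
    by (rule LIM_zero)
  moreover have "((\<lambda>x. x - a) \<longlongrightarrow> 0) (at_right a)"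
    by (rule LIM_zero) (rule tendsto_ident_at)
  ultimately have "((\<lambda>x. (f x - f a) / (x - a)) \<longlongrightarrow> l) (at_right a)"
  proof (rule lhopital_right[where f'=f' and g'="\<lambda>_. 1"])
    show "\<forall>\<^sub>F x in at_right a. x - a \<noteq> 0"
      using near by (rule eventually_mono) simp
    show "\<forall>\<^sub>F x in at_right a. ((\<lambda>x. f x - f a) has_real_derivative f' x) (at x)"
      using near by (rule eventually_mono) (use DERIV_diff[OF f_deriv DERIV_const] in auto)
    show "\<forall>\<^sub>F x in at_right a. ((\<lambda>x. x - a) has_real_derivative 1) (at x)"
      using DERIV_diff[OF DERIV_ident DERIV_const] by (intro always_eventually allI) simp
    show "((\<lambda>x. f' x / 1) \<longlongrightarrow> l) (at_right a)"
      using f'_lim by simp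
  qed simp
  then show ?thesis
    unfolding has_field_derivative_iff at_within_Icc_at_right[OF \<open>a < b\<close>] .
qed

lemma continuous_on_fun_upd_left_end:
  fixes f :: "real \<Rightarrow> real"
  assumes "a < b" and f_cont: "continuous_on {a<..b} f" and f_lim: "(f \<longlongrightarrow> L) (at_right a)"
  shows "continuous_on {a..b} (f(a := L))"
proof (rule continuous_on_IccI)
  have "\<forall>\<^sub>F x in at_right a. f x = (f(a := L)) x"
    using eventually_at_right_less[of a] by (rule eventually_mono) simp
  with f_lim show "(f(a := L) \<longlongrightarrow> (f(a := L)) a) (at_right a)"
    by (simp add: Lim_transform_eventually)
  have "continuous_on {(a + b) / 2..b} f"
    using f_cont by (rule continuous_on_subset) (use \<open>a < b\<close> in auto)
  then have "(f \<longlongrightarrow> f b) (at b within {(a + b) / 2..b})"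
    using \<open>a < b\<close> by (simp add: continuous_on_def)
  then have "(f \<longlongrightarrow> f b) (at_left b)"
    using at_within_Icc_at_left[of "(a + b) / 2" b] \<open>a < b\<close> by simp
  moreover have "\<forall>\<^sub>F x in at_left b. f x = (f(a := L)) x"
    using eventually_at_left_real[OF \<open>a < b\<close>] by (rule eventually_mono) simp
  ultimately show "(f(a := L) \<longlongrightarrow> (f(a := L)) b) (at_left b)"
    using \<open>a < b\<close> by (simp add: Lim_transform_eventually)
  fix x assume "a < x" "x < b"
  have "continuous_on {a<..<b} f"
    using f_cont by (rule continuous_on_subset) auto
  then have "(f \<longlongrightarrow> f x) (at x within {a<..<b})"
    using \<open>a < x\<close> \<open>x < b\<close> by (simp add: continuous_on_def)
  then have "(f \<longlongrightarrow> f x) (at x)"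
    using at_within_open[of x "{a<..<b}"] \<open>a < x\<close> \<open>x < b\<close> by simp
  moreover have "\<forall>\<^sub>F y in at x. y \<in> {a<..}"
    using \<open>a < x\<close> by (intro eventually_at_in_open') auto
  then have "\<forall>\<^sub>F y in at x. f y = (f(a := L)) y"
    by (rule eventually_mono) simp
  ultimately show "(f(a := L) \<longlongrightarrow> (f(a := L)) x) (at x)"
    using \<open>a < x\<close> by (simp add: Lim_transform_eventually)
qed (rule \<open>a < b\<close>)

section \<open>Positive solutions on an interval\<close>

lemma C1_onI:
  assumes deriv: "\<And>x. x \<in> S \<Longrightarrow> (f has_real_derivative f' x) (at x)" and "continuous_on S f'"
  shows "C1_on S f"
  unfolding C1_on_def
proof
  show "\<forall>x\<in>S. f differentiable at x"
    using deriv real_differentiable_def by blast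
  show "continuous_on S (deriv f)"
    using \<open>continuous_on S f'\<close> by (rule continuous_on_cong[THEN iffD1, rotated 2])
      (auto simp: DERIV_imp_deriv[OF deriv])
qed

lemma pos_sol_onI:
  assumes z_cont: "continuous_on {a..b} z"
    and z_deriv: "\<And>x. x \<in> {a<..<b} \<Longrightarrow> 0 < z x \<and> (z has_real_derivative h x - c - q x / z x) (at x)"
    and rhs_cont: "continuous_on {a<..<b} (\<lambda>x. h x - c - q x / z x)"
  shows "pos_sol_on q h c a b z"
  unfolding pos_sol_on_def
  using z_cont C1_onI[OF _ rhs_cont] z_deriv DERIV_imp_deriv by (metis (no_types, lifting))

lemma pos_sol_onD:
  assumes "pos_sol_on q h c a b z" and "x \<in> {a<..<b}"
  shows "0 < z x" and "(z has_real_derivative h x - c - q x / z x) (at x)"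
proof -
  have "z differentiable at x" "deriv z x = h x - c - q x / z x" "0 < z x"
    using assms by (auto simp: pos_sol_on_def C1_on_def)
  then show "0 < z x" "(z has_real_derivative h x - c - q x / z x) (at x)"
    by (auto simp: DERIV_deriv_iff_real_differentiable[symmetric])
qed

lemma pos_sol_on_subinterval:
  assumes "pos_sol_on q h c a b z" and "a \<le> a'" "a' < b'" "b' \<le> b"
  shows "pos_sol_on q h c a' b' z"
  using assms unfolding pos_sol_on_def C1_on_def by (auto elim: continuous_on_subset)

lemma pos_sol_on_reflect:
  assumes z: "pos_sol_on q h c a b z"
  shows "pos_sol_on (\<lambda>\<phi>. - q (1 - \<phi>)) (\<lambda>\<phi>. - h (1 - \<phi>)) (- c) (1 - b) (1 - a) (\<lambda>\<phi>. z (1 - \<phi>))"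
proof (rule pos_sol_onI)
  have reflect_cont: "continuous_on S (\<lambda>\<phi>::real. 1 - \<phi>)" for S
    by (intro continuous_on_diff continuous_on_const continuous_on_id)
  show "continuous_on {1 - b..1 - a} (\<lambda>\<phi>. z (1 - \<phi>))"
    using z unfolding pos_sol_on_def
    by (intro continuous_on_compose2[of "{a..b}" z, OF _ reflect_cont]) auto
  fix \<phi> assume "\<phi> \<in> {1 - b<..<1 - a}"
  then have x: "1 - \<phi> \<in> {a<..<b}"
    by auto
  have "((\<lambda>\<phi>. z (1 - \<phi>)) has_real_derivative
      (h (1 - \<phi>) - c - q (1 - \<phi>) / z (1 - \<phi>)) * (0 - 1)) (at \<phi>)"
    using pos_sol_onD(2)[OF z x] by (intro DERIV_chain2[of z] DERIV_diff DERIV_const DERIV_ident)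
  then show "0 < z (1 - \<phi>) \<and> ((\<lambda>\<phi>. z (1 - \<phi>)) has_real_derivative
      - h (1 - \<phi>) - - c - - q (1 - \<phi>) / z (1 - \<phi>)) (at \<phi>)"
    using pos_sol_onD(1)[OF z x] by (simp add: algebra_simps)
next
  have reflect_cont: "continuous_on S (\<lambda>\<phi>::real. 1 - \<phi>)" for S
    by (intro continuous_on_diff continuous_on_const continuous_on_id)
  have "continuous_on {a<..<b} (deriv z)"
    using z by (simp add: pos_sol_on_def C1_on_def)
  then have "continuous_on {1 - b<..<1 - a} (\<lambda>\<phi>. - deriv z (1 - \<phi>))"
    by (intro continuous_on_minus continuous_on_compose2[of "{a<..<b}" "deriv z", OF _ reflect_cont])
      auto
  then show "continuous_on {1 - b<..<1 - a} (\<lambda>\<phi>. - h (1 - \<phi>) - - c - - q (1 - \<phi>) / z (1 - \<phi>))"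
    by (rule continuous_on_cong[THEN iffD1, rotated 2]) (use z in \<open>auto simp: pos_sol_on_def\<close>)
qed

text \<open>The derivative of a positive solution extends to an end point where it stays positive, since
  there the right-hand side has a limit.\<close>

lemma pos_sol_on_has_derivative_at_right_end:
  assumes z: "pos_sol_on q h c a b z" and "a < b" "isCont h b" "isCont q b" "0 < z b"
  shows "(z has_real_derivative h b - c - q b / z b) (at b within {a..b})"
proof -
  have "(z \<longlongrightarrow> z b) (at_left b)"
    using z \<open>a < b\<close> by (simp add: pos_sol_on_def continuous_on_def at_within_Icc_at_left[symmetric])
  moreover have "(h \<longlongrightarrow> h b) (at_left b)" "(q \<longlongrightarrow> q b) (at_left b)"
    using \<open>isCont h b\<close> \<open>isCont q b\<close> by (simp_all add: isCont_def filterlim_at_split)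
  ultimately have "((\<lambda>x. h x - c - q x / z x) \<longlongrightarrow> h b - c - q b / z b) (at_left b)"
    using \<open>0 < z b\<close> by (intro tendsto_diff tendsto_divide tendsto_const) auto
  moreover have "continuous_on {a..b} z"
    using z by (simp add: pos_sol_on_def)
  ultimately show ?thesis
    using has_real_derivative_at_left_endpoint[OF \<open>a < b\<close> _ pos_sol_onD(2)[OF z]] by blast
qed

lemma pos_sol_on_has_derivative_at_left_end:
  assumes z: "pos_sol_on q h c a b z" and "a < b" "isCont h a" "isCont q a" "0 < z a"
  shows "(z has_real_derivative h a - c - q a / z a) (at a within {a..b})"
proof -
  have "(z \<longlongrightarrow> z a) (at_right a)"
    using z \<open>a < b\<close> by (simp add: pos_sol_on_def continuous_on_def at_within_Icc_at_right[symmetric])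
  moreover have "(h \<longlongrightarrow> h a) (at_right a)" "(q \<longlongrightarrow> q a) (at_right a)"
    using \<open>isCont h a\<close> \<open>isCont q a\<close> by (simp_all add: isCont_def filterlim_at_split)
  ultimately have "((\<lambda>x. h x - c - q x / z x) \<longlongrightarrow> h a - c - q a / z a) (at_right a)"
    using \<open>0 < z a\<close> by (intro tendsto_diff tendsto_divide tendsto_const) auto
  moreover have "continuous_on {a..b} z"
    using z by (simp add: pos_sol_on_def)
  ultimately show ?thesis
    using has_real_derivative_at_right_endpoint[OF \<open>a < b\<close> _ pos_sol_onD(2)[OF z]] by blast
qed

lemma pos_sol_on_glue:
  assumes "a < m" "m < b"
    and h_cont: "continuous_on {a..b} h" and q_cont: "continuous_on {a..b} q"
    and z1: "pos_sol_on q h c a m z1" and z2: "pos_sol_on q h c m b z2"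
    and "z1 m = z2 m" "0 < z1 m"
  shows "pos_sol_on q h c a b (\<lambda>x. if x \<le> m then z1 x else z2 x)"
proof -
  define z where "z x = (if x \<le> m then z1 x else z2 x)" for x
  have z1_cont: "continuous_on {a..m} z1" and z2_cont: "continuous_on {m..b} z2"
    using z1 z2 by (auto simp: pos_sol_on_def)
  have z_cont: "continuous_on {a..b} z"
  proof -
    have "{x \<in> {a..b}. x \<le> m} = {a..m}" "{x \<in> {a..b}. m \<le> x} = {m..b}"
      using assms by auto
    then show ?thesis
      unfolding z_def using z1_cont z2_cont \<open>z1 m = z2 m\<close>
      by (intro continuous_on_cases_le[where a=m and g=z2]) (auto intro: continuous_on_id)
  qed
  have h_isCont: "isCont h m" and q_isCont: "isCont q m"
    using assms continuous_on_interior[of "{a..b}"] by auto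
  have z1_deriv: "(z1 has_real_derivative h m - c - q m / z m) (at m within {a..m})"
    using pos_sol_on_has_derivative_at_right_end[OF z1 \<open>a < m\<close> h_isCont q_isCont \<open>0 < z1 m\<close>]
    by (simp add: z_def)
  have z2_deriv: "(z2 has_real_derivative h m - c - q m / z m) (at m within {m..b})"
    using pos_sol_on_has_derivative_at_left_end[OF z2 \<open>m < b\<close> h_isCont q_isCont]
      \<open>0 < z1 m\<close> \<open>z1 m = z2 m\<close>
    by (simp add: z_def)
  have "(z has_real_derivative h m - c - q m / z m) (at m within {a..m})"
    by (rule has_field_derivative_transform_within[where d=1, OF z1_deriv])
      (use \<open>a < m\<close> in \<open>auto simp: z_def\<close>)
  moreover have "(z has_real_derivative h m - c - q m / z m) (at m within {m..b})"
    by (rule has_field_derivative_transform_within[where d=1, OF z2_deriv])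
      (use \<open>m < b\<close> \<open>z1 m = z2 m\<close> in \<open>auto simp: z_def\<close>)
  ultimately have "(z has_real_derivative h m - c - q m / z m) (at m within {a..m} \<union> {m..b})"
    by (simp add: has_field_derivative_iff Lim_within_Un)
  moreover have "{a..m} \<union> {m..b} = {a..b}"
    using assms by auto
  ultimately have z_deriv_m: "(z has_real_derivative h m - c - q m / z m) (at m)"
    using at_within_interior[of m "{a..b}"] assms by auto
  have z_sol: "0 < z x \<and> (z has_real_derivative h x - c - q x / z x) (at x)" if x: "x \<in> {a<..<b}" for x
  proof (cases x m rule: linorder_cases)
    case less
    then have "x \<in> {a<..<m}"
      using x by auto
    with pos_sol_onD[OF z1 this] show ?thesis
      by (auto simp: z_def intro: has_field_derivative_transform_within_open[of _ _ _ "{a<..<m}"])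
  next
    case equal
    then show ?thesis
      using z_deriv_m \<open>0 < z1 m\<close> by (simp add: z_def)
  next
    case greater
    then have "x \<in> {m<..<b}"
      using x by auto
    with pos_sol_onD[OF z2 this] show ?thesis
      by (auto simp: z_def intro: has_field_derivative_transform_within_open[of _ _ _ "{m<..<b}"])
  qed
  have "\<forall>x\<in>{a<..<b}. z x \<noteq> 0"
    using z_sol by fastforce
  then have "continuous_on {a<..<b} (\<lambda>x. h x - c - q x / z x)"
    using h_cont q_cont z_cont
    by (intro continuous_on_diff continuous_on_divide continuous_on_const)
      (auto elim: continuous_on_subset)
  with z_cont z_sol show ?thesis
    unfolding z_def[abs_def] by (rule pos_sol_onI)
qed

lemma C1_on_minus:
  assumes "C1_on S f"
  shows "C1_on S (\<lambda>x. - f x)" and "x \<in> S \<Longrightarrow> deriv (\<lambda>x. - f x) x = - deriv f x"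
proof -
  have minus_deriv: "((\<lambda>x. - f x) has_real_derivative - deriv f x) (at x)" if "x \<in> S" for x
  proof -
    have "(f has_real_derivative deriv f x) (at x)"
      using assms that by (auto simp: C1_on_def DERIV_deriv_iff_real_differentiable)
    then show ?thesis
      by (rule DERIV_minus)
  qed
  show "C1_on S (\<lambda>x. - f x)"
    using assms by (intro C1_onI[OF minus_deriv] continuous_on_minus) (auto simp: C1_on_def)
  show "x \<in> S \<Longrightarrow> deriv (\<lambda>x. - f x) x = - deriv f x"
    using minus_deriv DERIV_imp_deriv by blast
qed

lemma zeta_sol_iff_pos_sol_on:
  "zeta_sol Q (\<lambda>x. - H x) s1 s2 c \<zeta> \<longleftrightarrow> pos_sol_on Q H (- c) s1 s2 (\<lambda>x. - \<zeta> x) \<and> \<zeta> s2 = 0"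
proof -
  have C1_iff: "C1_on {s1<..<s2} (\<lambda>x. - \<zeta> x) \<longleftrightarrow> C1_on {s1<..<s2} \<zeta>"
    using C1_on_minus(1)[of _ \<zeta>] C1_on_minus(1)[of _ "\<lambda>x. - \<zeta> x"] by auto
  have cont_iff: "continuous_on {s1..s2} (\<lambda>x. - \<zeta> x) \<longleftrightarrow> continuous_on {s1..s2} \<zeta>"
    using continuous_on_minus[of _ \<zeta>] continuous_on_minus[of _ "\<lambda>x. - \<zeta> x"] by auto
  have eq_iff: "(deriv (\<lambda>x. - \<zeta> x) x = H x - - c - Q x / - \<zeta> x \<and> - \<zeta> x > 0) \<longleftrightarrow>
      (deriv \<zeta> x = - H x - c - Q x / \<zeta> x \<and> \<zeta> x < 0)"
    if "C1_on {s1<..<s2} \<zeta>" "x \<in> {s1<..<s2}" for x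
    using C1_on_minus(2)[OF that] by auto
  show ?thesis
    unfolding zeta_sol_def pos_sol_on_def C1_iff cont_iff
    using eq_iff by blast
qed

lemma tendsto_at_right_if_antimono_bounded:
  fixes g :: "real \<Rightarrow> real"
  assumes "a < b"
    and antimono: "\<And>x y. a < x \<Longrightarrow> x \<le> y \<Longrightarrow> y \<le> b \<Longrightarrow> g y \<le> g x"
    and bounded: "\<And>x. x \<in> {a<..b} \<Longrightarrow> g x \<le> B"
  shows "(g \<longlongrightarrow> Sup (g ` {a<..b})) (at_right a)"
proof -
  have bdd: "bdd_above (g ` {a<..b})"
    by (rule bdd_aboveI2[of "{a<..b}" g B]) (rule bounded)
  show ?thesis
  proof (rule order_tendstoI)
    fix l assume "l < Sup (g ` {a<..b})"
    then obtain t where t: "t \<in> {a<..b}" "l < g t"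
      using less_cSupD[of "g ` {a<..b}"] \<open>a < b\<close> by force
    have "a < t"
      using t by simp
    show "\<forall>\<^sub>F x in at_right a. l < g x"
      using eventually_at_right_real[OF \<open>a < t\<close>]
    proof (rule eventually_mono)
      fix x assume "x \<in> {a<..<t}"
      then have "g t \<le> g x"
        using antimono[of x t] t by auto
      then show "l < g x"
        using t by linarith
    qed
  next
    fix u assume "Sup (g ` {a<..b}) < u"
    show "\<forall>\<^sub>F x in at_right a. g x < u"
      using eventually_at_right_real[OF \<open>a < b\<close>]
    proof (rule eventually_mono)
      fix x assume "x \<in> {a<..<b}"
      then have "g x \<le> Sup (g ` {a<..b})"
        by (intro cSup_upper bdd) auto
      then show "g x < u"
        using \<open>Sup (g ` {a<..b}) < u\<close> by linarith
    qed
  qed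
qed

lemma reciprocal_truncation_Lipschitz:
  fixes q M \<epsilon> u v :: real
  assumes "0 < \<epsilon>" "0 \<le> q" "q \<le> M"
  shows "\<bar>q / max u \<epsilon> - q / max v \<epsilon>\<bar> \<le> M / \<epsilon>\<^sup>2 * \<bar>u - v\<bar>"
proof -
  define A B where "A = max u \<epsilon>" and "B = max v \<epsilon>"
  have "\<epsilon> \<le> A" "\<epsilon> \<le> B" "\<bar>A - B\<bar> \<le> \<bar>u - v\<bar>"
    by (auto simp: A_def B_def max_def)
  have "q / A - q / B = q * (B - A) / (A * B)"
    using assms \<open>\<epsilon> \<le> A\<close> \<open>\<epsilon> \<le> B\<close> by (simp add: field_simps)
  then have "\<bar>q / A - q / B\<bar> = q * \<bar>A - B\<bar> / (A * B)"
    using assms \<open>\<epsilon> \<le> A\<close> \<open>\<epsilon> \<le> B\<close> by (simp add: abs_mult abs_divide abs_minus_commute)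
  also have "\<dots> \<le> M * \<bar>u - v\<bar> / (\<epsilon> * \<epsilon>)"
    using assms \<open>\<epsilon> \<le> A\<close> \<open>\<epsilon> \<le> B\<close> \<open>\<bar>A - B\<bar> \<le> \<bar>u - v\<bar>\<close>
    by (intro frac_le mult_mono) auto
  finally show ?thesis
    by (simp add: A_def B_def power2_eq_square)
qed

section \<open>The equation \<open>z' = H - C - Q / z\<close> with \<open>Q > 0\<close>\<close>

locale reciprocal_ode =
  fixes a b :: real and Q H :: "real \<Rightarrow> real"
  assumes a_less_b: "a < b"
    and Q_cont: "continuous_on {a..b} Q" and H_cont: "continuous_on {a..b} H"
    and Q_pos: "\<And>x. x \<in> {a<..<b} \<Longrightarrow> 0 < Q x"
begin

definition rhs :: "real \<Rightarrow> real \<Rightarrow> real \<Rightarrow> real" where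
  "rhs C x y = H x - C - Q x / y"

text \<open>Solutions are only required on \<open>(a, b]\<close>: their behaviour at \<open>a\<close> is the point of the
  analysis.\<close>

definition sol :: "real \<Rightarrow> (real \<Rightarrow> real) \<Rightarrow> bool" where
  "sol C z \<longleftrightarrow> continuous_on {a<..b} z \<and>
     (\<forall>x\<in>{a<..<b}. 0 < z x \<and> (z has_real_derivative rhs C x (z x)) (at x))"

lemma Q_nonneg: "x \<in> {a..b} \<Longrightarrow> 0 \<le> Q x"
  using continuous_ge_on_closure[of "{a<..<b}" Q x 0] Q_cont Q_pos a_less_b
  by (auto simp: less_imp_le)

lemma data_bounded: "\<exists>M>0. \<forall>x\<in>{a..b}. H x - C \<le> M \<and> C - H x \<le> M \<and> Q x \<le> M"
proof -
  have "continuous_on {a..b} (\<lambda>x. \<bar>H x - C\<bar> + \<bar>Q x\<bar>)"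
    by (intro continuous_intros H_cont Q_cont)
  then obtain M where M: "\<forall>x\<in>{a..b}. \<bar>H x - C\<bar> + \<bar>Q x\<bar> \<le> M"
    using compact_imp_bounded[OF compact_continuous_image[OF _ compact_Icc]]
    by (force simp: bounded_iff)
  have "H x - C \<le> \<bar>M\<bar> + 1 \<and> C - H x \<le> \<bar>M\<bar> + 1 \<and> Q x \<le> \<bar>M\<bar> + 1" if "x \<in> {a..b}" for x
  proof -
    have "\<bar>H x - C\<bar> + \<bar>Q x\<bar> \<le> M"
      using M that by blast
    then show ?thesis
      by arith
  qed
  then show ?thesis
    by (intro exI[of _ "\<bar>M\<bar> + 1"]) auto
qed

lemma sol_continuous_on: "sol C z \<Longrightarrow> a < x \<Longrightarrow> y \<le> b \<Longrightarrow> continuous_on {x..y} z"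
  unfolding sol_def by (auto elim: continuous_on_subset)

lemma sol_diff_has_derivative:
  assumes "sol C1 z1" "sol C2 z2" "t \<in> {a<..<b}"
  shows "((\<lambda>x. z1 x - z2 x) has_real_derivative
           (C2 - C1) + Q t * (z1 t - z2 t) / (z1 t * z2 t)) (at t)"
proof -
  have "0 < z1 t" "0 < z2 t"
    using assms by (auto simp: sol_def)
  then have "rhs C1 t (z1 t) - rhs C2 t (z2 t) = (C2 - C1) + Q t * (z1 t - z2 t) / (z1 t * z2 t)"
    by (simp add: rhs_def field_simps)
  moreover have "((\<lambda>x. z1 x - z2 x) has_real_derivative rhs C1 t (z1 t) - rhs C2 t (z2 t)) (at t)"
    using assms by (auto simp: sol_def intro!: derivative_intros)
  ultimately show ?thesis
    by simp
qed

lemma sol_le_if_terminal_le: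
  assumes z1: "sol C z1" and z2: "sol C z2" and "z1 b \<le> z2 b" and x: "x \<in> {a<..b}"
  shows "z1 x \<le> z2 x \<and> z2 x - z1 x \<le> z2 b - z1 b"
proof -
  define d where "d t = z2 t - z1 t" for t
  have d_deriv: "(d has_real_derivative Q t * d t / (z2 t * z1 t)) (at t)" if "t \<in> {a<..<b}" for t
    using sol_diff_has_derivative[OF z2 z1 that] by (simp add: d_def[abs_def])
  have prod_pos: "0 < z2 t * z1 t" if "t \<in> {a<..<b}" for t
    using z1 z2 that by (simp add: sol_def)
  have d_cont: "continuous_on {t..b} d" if "a < t" for t
    unfolding d_def using sol_continuous_on[OF z1 that] sol_continuous_on[OF z2 that]
    by (intro continuous_intros) auto
  have d_nonneg: "0 \<le> d t" if t: "t \<in> {a<..b}" for t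
  proof (rule ccontr)
    assume "\<not> 0 \<le> d t"
    have "\<forall>y\<in>{t..b}. d y \<le> d t"
    proof (rule sublevel_invariant[where v=d and \<theta>=0])
      fix y assume "y \<in> {t<..<b}" "d y < 0"
      then show "Q y * d y / (z2 y * z1 y) \<le> 0"
        using prod_pos[of y] Q_nonneg[of y] t
        by (auto simp: divide_nonpos_pos mult_nonneg_nonpos)
    qed (use t d_cont d_deriv \<open>\<not> 0 \<le> d t\<close> in auto)
    then have "d b \<le> d t"
      using t by auto
    then show False
      using \<open>\<not> 0 \<le> d t\<close> \<open>z1 b \<le> z2 b\<close> by (simp add: d_def)
  qed
  have "d x \<le> d b"
  proof (rule DERIV_nonneg_imp_increasing_open[of x b d])
    fix y assume "x < y" "y < b"
    then have "y \<in> {a<..<b}"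
      using x by auto
    then show "\<exists>D. (d has_real_derivative D) (at y) \<and> 0 \<le> D"
      using d_deriv prod_pos Q_nonneg[of y] d_nonneg[of y] by fastforce
  qed (use x d_cont in auto)
  then show ?thesis
    using d_nonneg[OF x] by (simp add: d_def)
qed

lemma sol_gap_grows:
  assumes z1: "sol C1 z1" and z2: "sol C2 z2" and "C1 < C2"
    and y: "y \<in> {a<..b}" and "z2 y \<le> z1 y"
  shows "(z1 y - z2 y) + (C2 - C1) * (b - y) \<le> z1 b - z2 b"
proof -
  define d where "d t = z1 t - z2 t" for t
  define d' where "d' t = (C2 - C1) + Q t * d t / (z1 t * z2 t)" for t
  have d_deriv: "(d has_real_derivative d' t) (at t)" if "t \<in> {a<..<b}" for t
    using sol_diff_has_derivative[OF z1 z2 that] by (simp add: d_def[abs_def] d'_def)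
  have d_cont: "continuous_on {y..b} d"
    unfolding d_def using sol_continuous_on[OF z1, of y b] sol_continuous_on[OF z2, of y b] y
    by (intro continuous_intros) auto
  have d'_ge: "C2 - C1 \<le> d' t" if "t \<in> {a<..<b}" "0 \<le> d t" for t
  proof -
    have "0 < z1 t * z2 t"
      using z1 z2 that(1) by (simp add: sol_def)
    then show ?thesis
      using that Q_nonneg[of t] by (simp add: d'_def)
  qed
  have "\<forall>t\<in>{y..b}. - d t \<le> - d y"
  proof (rule sublevel_invariant_strict[where u'="\<lambda>t. - d' t" and P="\<lambda>t. 0 \<le> d t"])
    fix t assume "t \<in> {y..<b}"
    then have "t \<in> {a<..<b}"
      using y by auto
    then show "((\<lambda>t. - d t) has_real_derivative - d' t) (at t)"
      using d_deriv by (auto intro!: derivative_eq_intros)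
    show "0 \<le> d t \<Longrightarrow> - d' t < 0"
      using d'_ge[OF \<open>t \<in> {a<..<b}\<close>] \<open>C1 < C2\<close> by linarith
  next
    show "continuous_on {y..b} (\<lambda>t. - d t)"
      using d_cont by (rule continuous_on_minus)
  qed (use y \<open>z2 y \<le> z1 y\<close> in \<open>auto simp: d_def\<close>)
  then have d_nonneg: "0 \<le> d t" if "t \<in> {y..b}" for t
    using that \<open>z2 y \<le> z1 y\<close> by (force simp: d_def)
  have "d y - (C2 - C1) * y \<le> d b - (C2 - C1) * b"
  proof (rule DERIV_nonneg_imp_increasing_open[of y b "\<lambda>t. d t - (C2 - C1) * t"])
    fix t assume t: "y < t" "t < b"
    then have "t \<in> {a<..<b}"
      using y by auto
    then show "\<exists>E. ((\<lambda>t. d t - (C2 - C1) * t) has_real_derivative E) (at t) \<and> 0 \<le> E"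
      using d_deriv d'_ge d_nonneg t
      by (intro exI[of _ "d' t - (C2 - C1)"]) (auto intro!: derivative_eq_intros)
  next
    show "continuous_on {y..b} (\<lambda>t. d t - (C2 - C1) * t)"
      using d_cont by (intro continuous_on_diff continuous_on_mult continuous_on_const continuous_on_id)
  qed (use y in auto)
  then show ?thesis
    by (simp add: d_def algebra_simps)
qed

lemma sol_if_pos_sol_on: "pos_sol_on Q H C a b z \<Longrightarrow> sol C z"
  using pos_sol_onD[of Q H C a b z]
  by (auto simp: sol_def rhs_def pos_sol_on_def elim: continuous_on_subset)

lemma pos_sol_on_if_sol:
  assumes z: "sol C z" and lim: "(z \<longlongrightarrow> L) (at_right a)"
  shows "pos_sol_on Q H C a b (z(a := L))"
proof (rule pos_sol_onI)
  show "continuous_on {a..b} (z(a := L))"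
    using z lim a_less_b by (intro continuous_on_fun_upd_left_end) (auto simp: sol_def)
  fix x assume x: "x \<in> {a<..<b}"
  then have "0 < z x" "(z has_real_derivative H x - C - Q x / z x) (at x)"
    using z by (auto simp: sol_def rhs_def)
  then show "0 < (z(a := L)) x \<and> (z(a := L) has_real_derivative H x - C - Q x / (z(a := L)) x) (at x)"
    using x by (auto intro: has_field_derivative_transform_within_open[of _ _ _ "{a<..<b}"])
next
  have "\<forall>x\<in>{a<..<b}. z x \<noteq> 0"
    using z by (force simp: sol_def)
  then have "continuous_on {a<..<b} (\<lambda>x. H x - C - Q x / z x)"
    using z H_cont Q_cont
    by (intro continuous_on_diff continuous_on_divide continuous_on_const)
      (auto simp: sol_def elim: continuous_on_subset)
  then show "continuous_on {a<..<b} (\<lambda>x. H x - C - Q x / (z(a := L)) x)"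
    by (rule continuous_on_cong[THEN iffD1, rotated 2]) auto
qed

lemma sol_uniform_lower_bound:
  assumes "a < x1" "x1 \<le> x2" "x2 < b"
  shows "\<exists>\<epsilon>>0. \<forall>z. sol C z \<longrightarrow> (\<forall>x\<in>{x1..x2}. \<epsilon> \<le> z x)"
proof -
  obtain M where "0 < M" and M: "\<forall>x\<in>{a..b}. H x - C \<le> M \<and> C - H x \<le> M \<and> Q x \<le> M"
    using data_bounded by blast
  define \<delta> where "\<delta> = (b - x2) / 2"
  have "0 < \<delta>" "x2 + \<delta> < b"
    using assms by (auto simp: \<delta>_def field_simps)
  have "continuous_on {x1..x2 + \<delta>} Q"
    using Q_cont by (rule continuous_on_subset) (use assms \<open>x2 + \<delta> < b\<close> in auto)
  then obtain xm where xm: "xm \<in> {x1..x2 + \<delta>}" and Q_min: "\<And>y. y \<in> {x1..x2 + \<delta>} \<Longrightarrow> Q xm \<le> Q y"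
    using continuous_attains_inf[OF compact_Icc, of x1 "x2 + \<delta>" Q] assms \<open>0 < \<delta>\<close> by auto
  define m where "m = Q xm"
  have "0 < m"
    using Q_pos xm assms \<open>x2 + \<delta> < b\<close> by (auto simp: m_def)
  define \<epsilon> where "\<epsilon> = min (m / (2 * M)) (sqrt (m * \<delta>))"
  have "0 < \<epsilon>"
    using \<open>0 < m\<close> \<open>0 < M\<close> \<open>0 < \<delta>\<close> by (simp add: \<epsilon>_def)
  have "\<epsilon> \<le> sqrt (m * \<delta>)" "\<epsilon> \<le> m / (2 * M)"
    by (simp_all add: \<epsilon>_def)
  then have "\<epsilon>\<^sup>2 \<le> (sqrt (m * \<delta>))\<^sup>2"
    using \<open>0 < \<epsilon>\<close> by (intro power_mono) auto
  then have "\<epsilon>\<^sup>2 \<le> m * \<delta>"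
    using \<open>0 < m\<close> \<open>0 < \<delta>\<close> by simp
  have "2 * \<epsilon> * M \<le> m"
    using \<open>\<epsilon> \<le> m / (2 * M)\<close> \<open>0 < M\<close> by (simp add: field_simps)
  have "\<epsilon> \<le> z x0" if z: "sol C z" and x0: "x0 \<in> {x1..x2}" for z x0
  proof (rule ccontr)
    assume "\<not> \<epsilon> \<le> z x0"
    define u where "u t = (z t)\<^sup>2 + m * (t - x0)" for t
    have z_pos: "0 < z t" if "t \<in> {x0..x0 + \<delta>}" for t
      using z that x0 assms \<open>x2 + \<delta> < b\<close> by (auto simp: sol_def)
    have z_cont: "continuous_on {x0..x0 + \<delta>} z"
      using sol_continuous_on[OF z] x0 assms \<open>x2 + \<delta> < b\<close> by auto
    have "\<forall>t\<in>{x0..x0 + \<delta>}. u t \<le> u x0"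
    proof (rule sublevel_invariant[where v=z and \<theta>=\<epsilon> and u'="\<lambda>t. 2 * z t * rhs C t (z t) + m"])
      show "continuous_on {x0..x0 + \<delta>} u"
        unfolding u_def by (intro continuous_intros z_cont)
      fix t assume t: "t \<in> {x0<..<x0 + \<delta>}"
      then have "t \<in> {a<..<b}"
        using x0 assms \<open>x2 + \<delta> < b\<close> by auto
      then show "(u has_real_derivative 2 * z t * rhs C t (z t) + m) (at t)"
        using z unfolding u_def sol_def by (auto intro!: derivative_eq_intros)
      assume "z t < \<epsilon>"
      have "t \<in> {a..b}" "t \<in> {x1..x2 + \<delta>}"
        using t x0 assms \<open>x2 + \<delta> < b\<close> by auto
      have "2 * z t * rhs C t (z t) = 2 * (z t * (H t - C)) - 2 * Q t"
        using z_pos[of t] t by (simp add: rhs_def field_simps)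
      also have "\<dots> \<le> 2 * (\<epsilon> * M) - 2 * m"
      proof -
        have "H t - C \<le> M"
          using M \<open>t \<in> {a..b}\<close> by blast
        then have "z t * (H t - C) \<le> z t * M"
          using z_pos[of t] t by (intro mult_left_mono) auto
        also have "\<dots> \<le> \<epsilon> * M"
          using \<open>z t < \<epsilon>\<close> \<open>0 < M\<close> by (intro mult_right_mono) auto
        finally have "z t * (H t - C) \<le> \<epsilon> * M" .
        then show ?thesis
          using Q_min[OF \<open>t \<in> {x1..x2 + \<delta>}\<close>] by (simp add: m_def)
      qed
      finally show "2 * z t * rhs C t (z t) + m \<le> 0"
        using \<open>2 * \<epsilon> * M \<le> m\<close> by linarith
    next
      fix t assume t: "t \<in> {x0..x0 + \<delta>}" and "u t \<le> u x0"
      moreover have "0 \<le> m * (t - x0)"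
        using \<open>0 < m\<close> t by simp
      ultimately have "(z t)\<^sup>2 \<le> (z x0)\<^sup>2"
        by (simp add: u_def)
      also have "\<dots> < \<epsilon>\<^sup>2"
        using \<open>\<not> \<epsilon> \<le> z x0\<close> z_pos[of x0] \<open>0 < \<delta>\<close> by (intro power_strict_mono) auto
      finally show "z t < \<epsilon>"
        by (rule power_less_imp_less_base) (use \<open>0 < \<epsilon>\<close> in simp)
    qed (use z_cont \<open>0 < \<delta>\<close> in auto)
    then have "u (x0 + \<delta>) \<le> u x0"
      using \<open>0 < \<delta>\<close> by auto
    then have "(z (x0 + \<delta>))\<^sup>2 + m * \<delta> \<le> (z x0)\<^sup>2"
      by (simp add: u_def)
    moreover have "(z x0)\<^sup>2 < \<epsilon>\<^sup>2"
      using \<open>\<not> \<epsilon> \<le> z x0\<close> z_pos[of x0] \<open>0 < \<delta>\<close> by (intro power_strict_mono) auto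
    ultimately show False
      using \<open>\<epsilon>\<^sup>2 \<le> m * \<delta>\<close> zero_le_power2[of "z (x0 + \<delta>)"] by linarith
  qed
  with \<open>0 < \<epsilon>\<close> show ?thesis
    by blast
qed

lemma sol_bounded_above:
  assumes z: "sol C z"
  shows "\<exists>B. \<forall>x\<in>{a<..b}. z x \<le> B"
proof -
  obtain M where "0 < M" and M: "\<forall>x\<in>{a..b}. H x - C \<le> M \<and> C - H x \<le> M \<and> Q x \<le> M"
    using data_bounded by blast
  define K where "K = 2 * M"
  have "z x \<le> max (z b) 1 + K * (b - a)" if x: "x \<in> {a<..b}" for x
  proof (rule ccontr)
    assume far: "\<not> z x \<le> max (z b) 1 + K * (b - a)"
    define u where "u t = - (z t + K * t)" for t
    have z_cont: "continuous_on {x..b} z"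
      using sol_continuous_on[OF z] x by auto
    have "\<forall>t\<in>{x..b}. u t \<le> u x"
    proof (rule sublevel_invariant[where v="\<lambda>t. - z t" and \<theta>="-1" and u'="\<lambda>t. - (rhs C t (z t) + K)"])
      show "x \<le> b"
        using x by simp
      show "continuous_on {x..b} u"
        unfolding u_def by (intro continuous_intros z_cont)
      show "continuous_on {x..b} (\<lambda>t. - z t)"
        by (intro continuous_intros z_cont)
      fix t assume t: "t \<in> {x<..<b}"
      then have "t \<in> {a<..<b}"
        using x by auto
      then show "(u has_real_derivative - (rhs C t (z t) + K)) (at t)"
        using z unfolding u_def sol_def by (auto intro!: derivative_eq_intros)
      assume "- z t < -1"
      then have "Q t / z t \<le> Q t"
        using divide_left_mono[of 1 "z t" "Q t"] Q_nonneg[of t] \<open>t \<in> {a<..<b}\<close> by simp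
      moreover have "C - H t \<le> M" "Q t \<le> M"
        using M \<open>t \<in> {a<..<b}\<close> by auto
      ultimately show "- (rhs C t (z t) + K) \<le> 0"
        unfolding rhs_def K_def by linarith
    next
      fix t assume t: "t \<in> {x..b}" and "u t \<le> u x"
      then have "z x - z t \<le> K * (t - x)"
        unfolding u_def by (simp add: right_diff_distrib)
      also have "\<dots> \<le> K * (b - a)"
        using t x \<open>0 < M\<close> by (intro mult_left_mono) (auto simp: K_def)
      finally show "- z t < -1"
        using far by linarith
    qed
    then have "u b \<le> u x"
      using x by auto
    then have "z x - z b \<le> K * (b - x)"
      unfolding u_def by (simp add: right_diff_distrib)
    also have "\<dots> \<le> K * (b - a)"
      using x \<open>0 < M\<close> by (intro mult_left_mono) (auto simp: K_def)
    finally show False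
      using far by linarith
  qed
  then show ?thesis
    by blast
qed

definition H_primitive :: "real \<Rightarrow> real" where
  "H_primitive t = integral {a..t} H"

lemma H_primitive_has_derivative: "t \<in> {a..b} \<Longrightarrow> (H_primitive has_real_derivative H t) (at t within {a..b})"
  unfolding H_primitive_def by (rule integral_has_real_derivative[OF H_cont])

lemma H_primitive_continuous_on: "continuous_on {a..b} H_primitive"
  unfolding H_primitive_def by (rule indefinite_integral_continuous_1[OF integrable_continuous_interval[OF H_cont]])

text \<open>The shifted function has derivative \<open>- Q / z \<le> 0\<close>.\<close>

lemma sol_minus_primitive_antimono:
  assumes "a \<le> x" "x \<le> y" "y \<le> b" and z_cont: "continuous_on {x..y} z"
    and z_sol: "\<And>t. t \<in> {x<..<y} \<Longrightarrow> 0 < z t \<and> (z has_real_derivative rhs C t (z t)) (at t)"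
  shows "z y - H_primitive y + C * y \<le> z x - H_primitive x + C * x"
proof (rule DERIV_nonpos_imp_decreasing_open[OF \<open>x \<le> y\<close>])
  show "continuous_on {x..y} (\<lambda>t. z t - H_primitive t + C * t)"
    using z_cont continuous_on_subset[OF H_primitive_continuous_on, of "{x..y}"] assms
    by (intro continuous_intros) auto
  fix t assume t: "x < t" "t < y"
  then have "(H_primitive has_real_derivative H t) (at t)"
    using H_primitive_has_derivative[of t] at_within_interior[of t "{a..b}"] assms by auto
  then have "((\<lambda>t. z t - H_primitive t + C * t) has_real_derivative rhs C t (z t) - H t + C) (at t)"
    using z_sol[of t] t by (auto intro!: derivative_eq_intros)
  moreover have "0 < z t"
    using z_sol[of t] t by auto
  then have "rhs C t (z t) - H t + C \<le> 0"
    using Q_nonneg[of t] t \<open>a \<le> x\<close> \<open>y \<le> b\<close> by (simp add: rhs_def divide_nonneg_pos)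
  ultimately show "\<exists>D. ((\<lambda>t. z t - H_primitive t + C * t) has_real_derivative D) (at t) \<and> D \<le> 0"
    by blast
qed

lemma sol_has_limit_at_left_end:
  assumes z: "sol C z"
  shows "\<exists>L. (z \<longlongrightarrow> L) (at_right a)"
proof -
  obtain B where B: "\<forall>x\<in>{a<..b}. z x \<le> B"
    using sol_bounded_above[OF z] by blast
  obtain MF where MF: "\<And>t. t \<in> {a..b} \<Longrightarrow> \<bar>H_primitive t\<bar> \<le> MF"
    using compact_imp_bounded[OF compact_continuous_image[OF H_primitive_continuous_on compact_Icc]]
    by (force simp: bounded_iff)
  define g where "g t = z t - H_primitive t + C * t" for t
  have "(g \<longlongrightarrow> Sup (g ` {a<..b})) (at_right a)"
  proof (rule tendsto_at_right_if_antimono_bounded[OF a_less_b])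
    fix x y assume "a < x" "x \<le> y" "y \<le> b"
    then show "g y \<le> g x"
      unfolding g_def using sol_continuous_on[OF z] z
      by (intro sol_minus_primitive_antimono) (auto simp: sol_def)
  next
    fix t assume t: "t \<in> {a<..b}"
    have "C * t \<le> \<bar>C\<bar> * \<bar>t\<bar>"
      by (simp add: abs_mult[symmetric])
    also have "\<dots> \<le> \<bar>C\<bar> * (\<bar>a\<bar> + \<bar>b\<bar>)"
      using t by (intro mult_left_mono) auto
    finally have "C * t \<le> \<bar>C\<bar> * (\<bar>a\<bar> + \<bar>b\<bar>)" .
    moreover have "z t \<le> B"
      using B t by blast
    moreover have "- H_primitive t \<le> MF"
      using MF[of t] t by (auto simp: abs_le_iff)
    ultimately show "g t \<le> B + MF + \<bar>C\<bar> * (\<bar>a\<bar> + \<bar>b\<bar>)"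
      by (simp add: g_def)
  qed
  moreover have "(H_primitive \<longlongrightarrow> H_primitive a) (at_right a)"
    using H_primitive_continuous_on a_less_b
    by (simp add: continuous_on_def at_within_Icc_at_right[symmetric])
  ultimately have "((\<lambda>t. g t + H_primitive t - C * t) \<longlongrightarrow>
      Sup (g ` {a<..b}) + H_primitive a - C * a) (at_right a)"
    by (intro tendsto_intros)
  then show ?thesis
    by (auto simp: g_def)
qed

text \<open>Truncating \<open>y\<close> below at \<open>\<epsilon>\<close> makes the right-hand side globally Lipschitz.\<close>

lemma truncated_sol_exists:
  assumes "p \<in> {a<..<b}" "0 < \<epsilon>"
  shows "\<exists>y. continuous_on {p..b} y \<and> y b = s \<and>
           (\<forall>x\<in>{p..b}. (y has_real_derivative rhs C x (max (y x) \<epsilon>)) (at x within {p..b}))"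
proof -
  obtain M where "0 < M" and M: "\<forall>x\<in>{a..b}. H x - C \<le> M \<and> C - H x \<le> M \<and> Q x \<le> M"
    using data_bounded by blast
  have "{p..b} \<subseteq> {a..b}"
    using assms by auto
  have "continuous_on ({p..b} \<times> UNIV) (\<lambda>xy. H (fst xy) - C - Q (fst xy) / max (snd xy) \<epsilon>)"
  proof -
    have "continuous_on ({p..b} \<times> UNIV) (\<lambda>xy::real \<times> real. H (fst xy))"
      "continuous_on ({p..b} \<times> UNIV) (\<lambda>xy::real \<times> real. Q (fst xy))"
      using continuous_on_subset[OF H_cont \<open>{p..b} \<subseteq> {a..b}\<close>]
        continuous_on_subset[OF Q_cont \<open>{p..b} \<subseteq> {a..b}\<close>]
      by (auto intro: continuous_on_compose2[OF _ continuous_on_fst])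
    moreover have "continuous_on ({p..b} \<times> UNIV) (\<lambda>xy::real \<times> real. max (snd xy) \<epsilon>)"
      by (intro continuous_on_max continuous_on_snd continuous_on_id continuous_on_const)
    ultimately show ?thesis
      using \<open>0 < \<epsilon>\<close> by (intro continuous_on_diff continuous_on_divide continuous_on_const) auto
  qed
  moreover have "0 < M / \<epsilon>\<^sup>2 + 1"
    using \<open>0 < M\<close> by (simp add: add_nonneg_pos)
  moreover have "\<bar>rhs C x (max u \<epsilon>) - rhs C x (max v \<epsilon>)\<bar> \<le> (M / \<epsilon>\<^sup>2 + 1) * \<bar>u - v\<bar>"
    if "x \<in> {p..b}" for x u v
  proof -
    have "0 \<le> Q x" "Q x \<le> M"
      using M Q_nonneg[of x] that \<open>{p..b} \<subseteq> {a..b}\<close> by auto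
    then have "\<bar>Q x / max v \<epsilon> - Q x / max u \<epsilon>\<bar> \<le> M / \<epsilon>\<^sup>2 * \<bar>v - u\<bar>"
      by (rule reciprocal_truncation_Lipschitz[OF \<open>0 < \<epsilon>\<close>])
    then have "\<bar>rhs C x (max u \<epsilon>) - rhs C x (max v \<epsilon>)\<bar> \<le> M / \<epsilon>\<^sup>2 * \<bar>u - v\<bar>"
      by (simp add: rhs_def abs_minus_commute)
    then show ?thesis
      by (simp add: distrib_right)
  qed
  ultimately show ?thesis
    using picard_backward[of p b "\<lambda>x y. rhs C x (max y \<epsilon>)" "M / \<epsilon>\<^sup>2 + 1" s] assms
    by (simp add: rhs_def)
qed

definition sol_on :: "real \<Rightarrow> real \<Rightarrow> (real \<Rightarrow> real) \<Rightarrow> bool" where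
  "sol_on C p y \<longleftrightarrow> continuous_on {p..b} y \<and>
     (\<forall>x\<in>{p..b}. 0 < y x \<and> (y has_real_derivative rhs C x (y x)) (at x within {p..b}))"

text \<open>Near \<open>b\<close> the truncated solution stays above \<open>s/2\<close> since \<open>y' \<le> M\<close>; further left it
  cannot enter the region \<open>y < \<epsilon>\<close>, where it would be decreasing.\<close>

lemma sol_on_exists:
  assumes p: "p \<in> {a<..<b}" and "0 < s"
  shows "\<exists>y. sol_on C p y \<and> y b = s"
proof -
  obtain M where "0 < M" and M: "\<forall>x\<in>{a..b}. H x - C \<le> M \<and> C - H x \<le> M \<and> Q x \<le> M"
    using data_bounded by blast
  define b' where "b' = max p (b - s / (2 * M))"
  have "0 < s / (2 * M)"
    using \<open>0 < s\<close> \<open>0 < M\<close> by simp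
  then have "p \<le> b'" "b' < b" "b - b' \<le> s / (2 * M)"
    using p by (auto simp: b'_def)
  have "continuous_on {p..b'} Q"
    using Q_cont by (rule continuous_on_subset) (use p \<open>b' < b\<close> in auto)
  then obtain xm where xm: "xm \<in> {p..b'}" and Q_min: "\<And>y. y \<in> {p..b'} \<Longrightarrow> Q xm \<le> Q y"
    using continuous_attains_inf[OF compact_Icc, of p b' Q] \<open>p \<le> b'\<close> by auto
  define m where "m = Q xm"
  have "0 < m"
    using Q_pos xm p \<open>b' < b\<close> by (auto simp: m_def)
  define \<epsilon> where "\<epsilon> = min (s / 2) (m / (2 * M))"
  have "0 < \<epsilon>"
    using \<open>0 < s\<close> \<open>0 < m\<close> \<open>0 < M\<close> by (simp add: \<epsilon>_def)
  have "\<epsilon> \<le> s / 2" "\<epsilon> \<le> m / (2 * M)"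
    by (simp_all add: \<epsilon>_def)
  then have "2 * M \<le> m / \<epsilon>"
    using \<open>0 < \<epsilon>\<close> \<open>0 < M\<close> by (simp add: field_simps)
  obtain y where y_cont: "continuous_on {p..b} y" and "y b = s"
    and y_deriv: "\<forall>x\<in>{p..b}. (y has_real_derivative rhs C x (max (y x) \<epsilon>)) (at x within {p..b})"
    using truncated_sol_exists[OF p \<open>0 < \<epsilon>\<close>] by blast
  have y_deriv_at: "(y has_real_derivative rhs C x (max (y x) \<epsilon>)) (at x)" if "x \<in> {p<..<b}" for x
    using bspec[OF y_deriv, of x] that at_within_interior[of x "{p..b}"] by auto
  have near_b: "s / 2 \<le> y x" if x: "x \<in> {b'..b}" for x
  proof -
    have "y b - M * b \<le> y x - M * x"
    proof (rule DERIV_nonpos_imp_decreasing_open[of x b "\<lambda>t. y t - M * t"])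
      show "continuous_on {x..b} (\<lambda>t. y t - M * t)"
        using continuous_on_subset[OF y_cont, of "{x..b}"] x \<open>p \<le> b'\<close>
        by (intro continuous_intros) auto
      fix t assume t: "x < t" "t < b"
      then have "t \<in> {p<..<b}" "t \<in> {a..b}"
        using x \<open>p \<le> b'\<close> p by auto
      moreover have "rhs C t (max (y t) \<epsilon>) \<le> M"
      proof -
        have "H t - C \<le> M" "0 \<le> Q t / max (y t) \<epsilon>"
          using M \<open>t \<in> {a..b}\<close> Q_nonneg[of t] \<open>0 < \<epsilon>\<close> by auto
        then show ?thesis
          by (simp add: rhs_def)
      qed
      ultimately show "\<exists>D. ((\<lambda>t. y t - M * t) has_real_derivative D) (at t) \<and> D \<le> 0"
        using y_deriv_at
        by (intro exI[of _ "rhs C t (max (y t) \<epsilon>) - M"]) (auto intro!: derivative_eq_intros)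
    qed (use x in auto)
    moreover have "M * (b - x) \<le> M * (s / (2 * M))"
      using \<open>b - b' \<le> s / (2 * M)\<close> x \<open>0 < M\<close> by (intro mult_left_mono) auto
    ultimately show ?thesis
      using \<open>y b = s\<close> \<open>0 < M\<close> by (simp add: algebra_simps)
  qed
  have above_\<epsilon>: "\<epsilon> \<le> y x" if x: "x \<in> {p..b}" for x
  proof (cases "b' \<le> x")
    case True
    then show ?thesis
      using near_b[of x] x \<open>\<epsilon> \<le> s / 2\<close> by auto
  next
    case False
    show ?thesis
    proof (rule ccontr)
      assume "\<not> \<epsilon> \<le> y x"
      have "continuous_on {x..b'} y"
        using continuous_on_subset[OF y_cont] x \<open>b' < b\<close> by auto
      have "\<forall>t\<in>{x..b'}. y t \<le> y x"
      proof (rule sublevel_invariant[where v=y and \<theta>=\<epsilon> and u'="\<lambda>t. rhs C t (max (y t) \<epsilon>)"])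
        fix t assume t: "t \<in> {x<..<b'}"
        then show "(y has_real_derivative rhs C t (max (y t) \<epsilon>)) (at t)"
          using y_deriv_at x \<open>b' < b\<close> by auto
        assume "y t < \<epsilon>"
        have "t \<in> {p..b'}" "t \<in> {a..b}"
          using t x \<open>b' < b\<close> p by auto
        then have "m \<le> Q t" "H t - C \<le> M"
          using Q_min M by (auto simp: m_def)
        then have "m / \<epsilon> \<le> Q t / \<epsilon>"
          using \<open>0 < \<epsilon>\<close> by (simp add: divide_right_mono)
        moreover have "max (y t) \<epsilon> = \<epsilon>"
          using \<open>y t < \<epsilon>\<close> by simp
        ultimately show "rhs C t (max (y t) \<epsilon>) \<le> 0"
          using \<open>H t - C \<le> M\<close> \<open>2 * M \<le> m / \<epsilon>\<close> \<open>0 < M\<close> unfolding rhs_def by linarith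
      qed (use False \<open>\<not> \<epsilon> \<le> y x\<close> \<open>continuous_on {x..b'} y\<close> in auto)
      then have "y b' \<le> y x"
        using False by auto
      then show False
        using near_b[of b'] \<open>b' < b\<close> \<open>\<not> \<epsilon> \<le> y x\<close> \<open>\<epsilon> \<le> s / 2\<close> by auto
    qed
  qed
  have "0 < y x \<and> (y has_real_derivative rhs C x (y x)) (at x within {p..b})" if x: "x \<in> {p..b}" for x
  proof -
    have "max (y x) \<epsilon> = y x"
      using above_\<epsilon>[OF x] by simp
    then show ?thesis
      using above_\<epsilon>[OF x] bspec[OF y_deriv x] \<open>0 < \<epsilon>\<close> by simp
  qed
  with y_cont \<open>y b = s\<close> show ?thesis
    by (auto simp: sol_on_def)
qed

lemma sol_on_unique:
  assumes y1: "sol_on C p1 y1" and y2: "sol_on C p2 y2" and "y1 b = y2 b"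
    and "a < p1" and x: "max p1 p2 \<le> x" "x \<le> b"
  shows "y1 x = y2 x"
proof -
  define e where "e t = (y1 t - y2 t)\<^sup>2" for t
  have "e x \<le> e b"
  proof (rule DERIV_nonneg_imp_increasing_open[of x b e])
    show "continuous_on {x..b} e"
      unfolding e_def using y1 y2 x
      by (intro continuous_intros) (auto simp: sol_on_def elim: continuous_on_subset)
    fix t assume t: "x < t" "t < b"
    have "t \<in> {p1..b}" "t \<in> {p2..b}"
      using t x by auto
    then have "(y1 has_real_derivative rhs C t (y1 t)) (at t within {p1..b})"
      "(y2 has_real_derivative rhs C t (y2 t)) (at t within {p2..b})"
      and pos: "0 < y1 t" "0 < y2 t"
      using y1 y2 by (auto simp: sol_on_def)
    moreover have "at t within {p1..b} = at t" "at t within {p2..b} = at t"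
      using t x by (auto intro: at_within_interior)
    ultimately have "(e has_real_derivative 2 * (y1 t - y2 t) * (rhs C t (y1 t) - rhs C t (y2 t))) (at t)"
      unfolding e_def by (auto intro!: derivative_eq_intros)
    moreover have "2 * (y1 t - y2 t) * (rhs C t (y1 t) - rhs C t (y2 t))
        = 2 * Q t * (y1 t - y2 t)\<^sup>2 / (y1 t * y2 t)"
      using pos by (simp add: rhs_def field_simps power2_eq_square)
    moreover have "0 \<le> 2 * Q t * (y1 t - y2 t)\<^sup>2 / (y1 t * y2 t)"
      using Q_nonneg[of t] t x \<open>a < p1\<close> pos by simp
    ultimately show "\<exists>D. (e has_real_derivative D) (at t) \<and> 0 \<le> D"
      by auto
  qed (use x in auto)
  then show ?thesis
    using \<open>y1 b = y2 b\<close> by (simp add: e_def)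
qed

lemma sol_if_locally_sol_on:
  assumes local: "\<And>x. x \<in> {a<..b} \<Longrightarrow> \<exists>p\<in>{a<..<x}. \<exists>y. sol_on C p y \<and> (\<forall>t\<in>{p..b}. z t = y t)"
  shows "sol C z"
proof -
  have "continuous (at x within {a<..b}) z \<and>
      (x < b \<longrightarrow> 0 < z x \<and> (z has_real_derivative rhs C x (z x)) (at x))" if x: "x \<in> {a<..b}" for x
  proof -
    obtain p y where p: "p \<in> {a<..<x}" and y: "sol_on C p y" and z_eq: "\<forall>t\<in>{p..b}. z t = y t"
      using local[OF x] by blast
    have "continuous_on {p..b} z"
      using y z_eq continuous_on_cong[of "{p..b}" "{p..b}" z y] by (simp add: sol_on_def)
    then have "continuous (at x within {p..b}) z"
      using p x by (simp add: continuous_on_eq_continuous_within)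
    moreover have "at x within {a<..b} = at x within {p..b}"
      by (rule at_within_nhd[of x "{p<..}"]) (use p x in auto)
    moreover have "0 < z x \<and> (z has_real_derivative rhs C x (z x)) (at x)" if "x < b"
    proof -
      have "(y has_real_derivative rhs C x (y x)) (at x within {p..b})" "0 < y x"
        using y p x by (auto simp: sol_on_def)
      moreover have "at x within {p..b} = at x"
        using p x \<open>x < b\<close> by (intro at_within_interior) auto
      ultimately have "(y has_real_derivative rhs C x (y x)) (at x)" "0 < y x"
        by simp_all
      moreover have "z x = y x"
        using z_eq p x by auto
      moreover have "(z has_real_derivative rhs C x (y x)) (at x)"
        by (rule has_field_derivative_transform_within_open[OF \<open>(y has_real_derivative _) (at x)\<close>,
              of "{p<..<b}"]) (use z_eq p x \<open>x < b\<close> in auto)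
      ultimately show ?thesis
        by simp
    qed
    ultimately show ?thesis
      by simp
  qed
  then show ?thesis
    by (auto simp: sol_def continuous_on_eq_continuous_within)
qed

text \<open>Local solutions with the same terminal value agree, so they patch together to a solution
  on \<open>(a, b]\<close>.\<close>

lemma sol_exists:
  assumes "0 < s"
  shows "\<exists>z. sol C z \<and> z b = s"
proof -
  define Z where "Z p = (SOME y. sol_on C p y \<and> y b = s)" for p
  have Z: "sol_on C p (Z p) \<and> Z p b = s" if "p \<in> {a<..<b}" for p
    unfolding Z_def using sol_on_exists[OF that \<open>0 < s\<close>] by (rule someI_ex)
  define z where "z x = Z ((a + x) / 2) x" for x
  have "sol C z"
  proof (rule sol_if_locally_sol_on)
    fix x assume x: "x \<in> {a<..b}"
    define p where "p = (a + x) / 2"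
    have "p \<in> {a<..<x}" "p \<in> {a<..<b}"
      using x by (auto simp: p_def)
    moreover have "z t = Z p t" if "t \<in> {p..b}" for t
    proof -
      have "(a + t) / 2 \<in> {a<..<b}" "max ((a + t) / 2) p \<le> t"
        using that \<open>p \<in> {a<..<x}\<close> x by auto
      moreover have Zt: "sol_on C ((a + t) / 2) (Z ((a + t) / 2))" and Zp: "sol_on C p (Z p)"
        and "Z ((a + t) / 2) b = Z p b"
        using Z[of "(a + t) / 2"] Z[of p] \<open>p \<in> {a<..<b}\<close> \<open>(a + t) / 2 \<in> {a<..<b}\<close> by auto
      ultimately show ?thesis
        unfolding z_def
        by (intro sol_on_unique[OF Zt Zp \<open>Z ((a + t) / 2) b = Z p b\<close>]) (use that in auto)
    qed
    ultimately show "\<exists>p\<in>{a<..<x}. \<exists>y. sol_on C p y \<and> (\<forall>t\<in>{p..b}. z t = y t)"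
      using Z by blast
  qed
  moreover have "z b = s"
    using Z[of "(a + b) / 2"] a_less_b by (simp add: z_def)
  ultimately show ?thesis
    by blast
qed

lemma sol_if_uniform_limit:
  assumes sols: "\<And>n. sol C (zs n)" and lim: "uniform_limit {a<..b} zs w sequentially"
  shows "sol C w"
proof -
  have w_cont: "continuous_on {a<..b} w"
    by (rule uniform_limit_theorem[OF _ lim]) (use sols in \<open>auto simp: sol_def\<close>)
  obtain M where "0 < M" and M: "\<forall>x\<in>{a..b}. H x - C \<le> M \<and> C - H x \<le> M \<and> Q x \<le> M"
    using data_bounded by blast
  have "0 < w x \<and> (w has_real_derivative rhs C x (w x)) (at x)" if x: "x \<in> {a<..<b}" for x
  proof -
    define x1 x2 where "x1 = (a + x) / 2" and "x2 = (x + b) / 2"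
    have "a < x1" "x1 < x" "x < x2" "x2 < b"
      using x by (auto simp: x1_def x2_def)
    then obtain \<epsilon> where "0 < \<epsilon>" and low: "\<forall>z. sol C z \<longrightarrow> (\<forall>t\<in>{x1..x2}. \<epsilon> \<le> z t)"
      using sol_uniform_lower_bound[of x1 x2 C] by auto
    have zs_ge: "\<epsilon> \<le> zs n t" if "t \<in> {x1..x2}" for n t
      using low sols that by blast
    have zs_lim: "(\<lambda>n. zs n t) \<longlonglongrightarrow> w t" if "t \<in> {x1..x2}" for t
      using tendsto_uniform_limitI[OF lim, of t] that \<open>a < x1\<close> \<open>x2 < b\<close> by auto
    have w_ge: "\<epsilon> \<le> w t" if "t \<in> {x1..x2}" for t
      using zs_ge[OF that] by (intro tendsto_lowerbound[OF zs_lim[OF that]] always_eventually allI) auto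
    have "\<exists>g. \<forall>t\<in>{x1..x2}. (\<lambda>n. zs n t) \<longlonglongrightarrow> g t \<and>
        (g has_derivative (\<lambda>h. rhs C t (w t) * h)) (at t within {x1..x2})"
    proof (rule has_derivative_sequence[of "{x1..x2}" zs "\<lambda>n t h. rhs C t (zs n t) * h"])
      fix n t assume "t \<in> {x1..x2}"
      then have "(zs n has_real_derivative rhs C t (zs n t)) (at t)"
        using sols[of n] \<open>a < x1\<close> \<open>x2 < b\<close> by (auto simp: sol_def)
      then show "(zs n has_derivative (\<lambda>h. rhs C t (zs n t) * h)) (at t within {x1..x2})"
        unfolding has_field_derivative_def by (rule has_derivative_at_withinI)
    next
      fix e :: real assume "0 < e"
      then have "\<forall>\<^sub>F n in sequentially. \<forall>t\<in>{a<..b}. dist (zs n t) (w t) < e * \<epsilon>\<^sup>2 / M"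
        using lim \<open>0 < \<epsilon>\<close> \<open>0 < M\<close> by (auto simp: uniform_limit_iff)
      then show "\<forall>\<^sub>F n in sequentially. \<forall>t\<in>{x1..x2}. \<forall>h.
          norm (rhs C t (zs n t) * h - rhs C t (w t) * h) \<le> e * norm h"
      proof (rule eventually_mono, intro ballI allI)
        fix n t h assume close: "\<forall>t\<in>{a<..b}. dist (zs n t) (w t) < e * \<epsilon>\<^sup>2 / M"
          and t: "t \<in> {x1..x2}"
        then have "t \<in> {a<..b}" "t \<in> {a..b}"
          using \<open>a < x1\<close> \<open>x2 < b\<close> by auto
        have "\<bar>Q t / max (zs n t) \<epsilon> - Q t / max (w t) \<epsilon>\<bar> \<le> M / \<epsilon>\<^sup>2 * \<bar>zs n t - w t\<bar>"
          using M Q_nonneg[of t] \<open>t \<in> {a..b}\<close>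
          by (intro reciprocal_truncation_Lipschitz \<open>0 < \<epsilon>\<close>) auto
        moreover have "max (zs n t) \<epsilon> = zs n t" "max (w t) \<epsilon> = w t"
          using zs_ge[OF t] w_ge[OF t] by auto
        moreover have "M / \<epsilon>\<^sup>2 * \<bar>zs n t - w t\<bar> \<le> e"
        proof -
          have "\<bar>zs n t - w t\<bar> \<le> e * \<epsilon>\<^sup>2 / M"
            using bspec[OF close \<open>t \<in> {a<..b}\<close>] by (simp add: dist_real_def)
          then have "M / \<epsilon>\<^sup>2 * \<bar>zs n t - w t\<bar> \<le> M / \<epsilon>\<^sup>2 * (e * \<epsilon>\<^sup>2 / M)"
            using \<open>0 < M\<close> by (intro mult_left_mono) auto
          also have "\<dots> = e"
            using \<open>0 < M\<close> \<open>0 < \<epsilon>\<close> by simp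
          finally show ?thesis .
        qed
        ultimately have "\<bar>rhs C t (zs n t) - rhs C t (w t)\<bar> \<le> e"
          by (simp add: rhs_def abs_minus_commute)
        then show "norm (rhs C t (zs n t) * h - rhs C t (w t) * h) \<le> e * norm h"
          by (simp add: left_diff_distrib[symmetric] abs_mult mult_right_mono)
      qed
    next
      show "x \<in> {x1..x2}"
        using \<open>x1 < x\<close> \<open>x < x2\<close> by auto
      then show "(\<lambda>n. zs n x) \<longlonglongrightarrow> w x"
        by (rule zs_lim)
    qed simp
    then obtain g where g: "\<forall>t\<in>{x1..x2}. (\<lambda>n. zs n t) \<longlonglongrightarrow> g t \<and>
        (g has_derivative (\<lambda>h. rhs C t (w t) * h)) (at t within {x1..x2})"
      by blast
    have g_eq: "g t = w t" if "t \<in> {x1..x2}" for t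
      using g that zs_lim[OF that] LIMSEQ_unique by blast
    have "(g has_real_derivative rhs C x (w x)) (at x within {x1..x2})"
      using g \<open>x1 < x\<close> \<open>x < x2\<close> by (auto simp: has_field_derivative_def)
    then have "(w has_real_derivative rhs C x (w x)) (at x within {x1..x2})"
      by (rule has_field_derivative_transform_within[OF _ zero_less_one])
        (use g_eq \<open>x1 < x\<close> \<open>x < x2\<close> in auto)
    moreover have "at x within {x1..x2} = at x"
      using \<open>x1 < x\<close> \<open>x < x2\<close> by (intro at_within_interior) auto
    ultimately show ?thesis
      using w_ge[of x] \<open>0 < \<epsilon>\<close> \<open>x1 < x\<close> \<open>x < x2\<close> by auto
  qed
  with w_cont show ?thesis
    by (simp add: sol_def)
qed

lemma sol_with_terminal_zero_exists: "\<exists>w. sol C w \<and> w b = 0"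
proof -
  define \<sigma> where "\<sigma> n = 1 / real (Suc n)" for n
  have "\<forall>n. \<exists>z. sol C z \<and> z b = \<sigma> n"
    using sol_exists by (simp add: \<sigma>_def)
  then obtain zs where "\<forall>n. sol C (zs n) \<and> zs n b = \<sigma> n"
    using choice[of "\<lambda>n z. sol C z \<and> z b = \<sigma> n"] by blast
  then have zs: "\<And>n. sol C (zs n)" and zs_b: "\<And>n. zs n b = \<sigma> n"
    by auto
  have "\<bar>zs m x - zs n x\<bar> \<le> \<sigma> n" if "n \<le> m" "x \<in> {a<..b}" for n m x
  proof -
    have "\<sigma> m \<le> \<sigma> n" "0 < \<sigma> m"
      using that by (simp_all add: \<sigma>_def field_simps)
    then show ?thesis
      using sol_le_if_terminal_le[OF zs[of m] zs[of n] _ \<open>x \<in> {a<..b}\<close>] zs_b by auto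
  qed
  moreover have "\<sigma> \<longlonglongrightarrow> 0"
    unfolding \<sigma>_def using LIMSEQ_inverse_real_of_nat by (simp add: inverse_eq_divide)
  ultimately obtain w where lim: "uniform_limit {a<..b} zs w sequentially"
    using uniform_limit_of_Cauchy_bound by blast
  have "sol C w"
    using zs lim by (rule sol_if_uniform_limit)
  moreover have "(\<lambda>n. zs n b) \<longlonglongrightarrow> w b"
    using tendsto_uniform_limitI[OF lim, of b] a_less_b by simp
  then have "w b = 0"
    using \<open>\<sigma> \<longlonglongrightarrow> 0\<close> zs_b LIMSEQ_unique by auto
  ultimately show ?thesis
    by blast
qed

definition terminal_values :: "real \<Rightarrow> real set" where
  "terminal_values C = {z b | z. pos_sol_on Q H C a b z \<and> z a = 0}"

text \<open>\<open>threshold\<close> is \<open>- c\<^sup>*(Q; - H; a, b)\<close>; on \<open>[\<alpha>, \<gamma>]\<close> it is \<open>c\<^sup>*\<^sub>3\<^sub>.\<^sub>1\<close>.\<close>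

definition threshold :: ereal where
  "threshold = - cstar Q (\<lambda>x. - H x) a b"

lemma terminal_valuesI:
  assumes "sol C z" "(z \<longlongrightarrow> 0) (at_right a)"
  shows "z b \<in> terminal_values C"
proof -
  have "pos_sol_on Q H C a b (z(a := 0))"
    using assms by (rule pos_sol_on_if_sol)
  moreover have "(z(a := 0)) b = z b"
    using a_less_b by simp
  ultimately show ?thesis
    unfolding terminal_values_def by (intro CollectI exI[of _ "z(a := 0)"]) simp
qed

lemma terminal_zero_sol_vanishes:
  assumes "ereal C < threshold" and w: "sol C w" "w b = 0"
  shows "(w \<longlongrightarrow> 0) (at_right a)"
proof -
  obtain L where L: "(w \<longlongrightarrow> L) (at_right a)"
    using sol_has_limit_at_left_end[OF w(1)] by blast
  have w_pos: "0 < w x" if "x \<in> {a<..<b}" for x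
    using w(1) that by (simp add: sol_def)
  have "\<forall>\<^sub>F x in at_right a. 0 \<le> w x"
    using eventually_at_right_real[OF a_less_b] by (rule eventually_mono) (use w_pos in force)
  then have "0 \<le> L"
    using tendsto_lowerbound[OF L] by simp
  moreover have "\<not> 0 < L"
  proof
    assume "0 < L"
    have "pos_sol_on Q H C a b (w(a := L))"
      using w(1) L by (rule pos_sol_on_if_sol)
    then have "zeta_sol Q (\<lambda>x. - H x) a b (- C) (\<lambda>x. - (w(a := L)) x)"
      using w(2) a_less_b by (simp add: zeta_sol_iff_pos_sol_on fun_upd_def)
    moreover have "(\<lambda>x. - (w(a := L)) x) a < 0"
      using \<open>0 < L\<close> by simp
    ultimately have "ereal (- C) \<in> {ereal c | c. \<exists>\<zeta>. zeta_sol Q (\<lambda>x. - H x) a b c \<zeta> \<and> \<zeta> a < 0}"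
      by blast
    then have "ereal (- C) \<le> cstar Q (\<lambda>x. - H x) a b"
      unfolding cstar_def by (rule Sup_upper)
    then have "threshold \<le> ereal C"
      unfolding threshold_def by (simp add: ereal_uminus_le_reorder)
    with \<open>ereal C < threshold\<close> show False
      by simp
  qed
  ultimately show ?thesis
    using L by simp
qed

text \<open>A solution with a small terminal value stays below the solution \<open>w\<close> for a larger
  constant with \<open>w(b) = 0\<close>, which vanishes at \<open>a\<close>.\<close>

lemma positive_terminal_value_exists:
  assumes "ereal C < threshold"
  shows "\<exists>s\<in>terminal_values C. 0 < s"
proof -
  obtain C' where "ereal C < ereal C'" "ereal C' < threshold"
    using ereal_dense2[OF assms] by blast
  then have "C < C'"
    by simp
  obtain w where w: "sol C' w" "w b = 0"
    using sol_with_terminal_zero_exists by blast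
  have w_lim: "(w \<longlongrightarrow> 0) (at_right a)"
    using \<open>ereal C' < threshold\<close> w by (rule terminal_zero_sol_vanishes)
  define s0 where "s0 = (C' - C) * (b - a) / 4"
  have "0 < s0"
    using \<open>C < C'\<close> a_less_b by (simp add: s0_def)
  then obtain z where z: "sol C z" "z b = s0"
    using sol_exists by blast
  have below: "z y < w y" if y: "y \<in> {a<..(a + b) / 2}" for y
  proof (rule ccontr)
    assume "\<not> z y < w y"
    then have "(z y - w y) + (C' - C) * (b - y) \<le> z b - w b"
      using y a_less_b by (intro sol_gap_grows[OF z(1) w(1) \<open>C < C'\<close>]) auto
    moreover have "(C' - C) * ((b - a) / 2) \<le> (C' - C) * (b - y)"
      using y \<open>C < C'\<close> by (intro mult_left_mono) auto
    ultimately show False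
      using \<open>\<not> z y < w y\<close> \<open>0 < s0\<close> z(2) w(2) by (simp add: s0_def field_simps)
  qed
  have "(z \<longlongrightarrow> 0) (at_right a)"
  proof (rule tendsto_sandwich[where f="\<lambda>_. 0" and h=w])
    show "\<forall>\<^sub>F x in at_right a. 0 \<le> z x"
      using eventually_at_right_real[OF a_less_b]
      by (rule eventually_mono) (use z(1) in \<open>auto simp: sol_def less_imp_le\<close>)
    have "a < (a + b) / 2"
      using a_less_b by simp
    show "\<forall>\<^sub>F x in at_right a. z x \<le> w x"
      using eventually_at_right_real[OF \<open>a < (a + b) / 2\<close>]
      by (rule eventually_mono) (use below in \<open>auto simp: less_imp_le\<close>)
  qed (use w_lim in auto)
  then have "s0 \<in> terminal_values C"
    using terminal_valuesI[OF z(1)] z(2) by simp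
  with \<open>0 < s0\<close> show ?thesis
    by blast
qed

lemma terminal_values_bdd_above: "bdd_above (terminal_values C)"
proof (rule bdd_aboveI)
  fix s assume "s \<in> terminal_values C"
  then obtain z where z: "pos_sol_on Q H C a b z" "z a = 0" "z b = s"
    by (auto simp: terminal_values_def)
  have "z b - H_primitive b + C * b \<le> z a - H_primitive a + C * a"
    using z(1) a_less_b pos_sol_onD[OF z(1)]
    by (intro sol_minus_primitive_antimono) (auto simp: pos_sol_on_def rhs_def)
  then show "s \<le> H_primitive b - C * b + C * a"
    using z(2,3) by (simp add: H_primitive_def)
qed

text \<open>Every value between \<open>0\<close> and the supremum is attained: the solution with that terminal
  value is squeezed at \<open>a\<close> between \<open>0\<close> and a solution from the set with a nearby terminal value.\<close>

lemma terminal_values_interval: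
  assumes "ereal C < threshold" and s: "0 < s" "s \<le> Sup (terminal_values C)"
  shows "s \<in> terminal_values C"
proof -
  have nonempty: "terminal_values C \<noteq> {}"
    using positive_terminal_value_exists[OF assms(1)] by blast
  obtain z where z: "sol C z" "z b = s"
    using sol_exists[OF \<open>0 < s\<close>] by blast
  have "(z \<longlongrightarrow> 0) (at_right a)"
  proof (rule order_tendstoI)
    fix l :: real assume "l < 0"
    show "\<forall>\<^sub>F x in at_right a. l < z x"
      using eventually_at_right_real[OF a_less_b]
      by (rule eventually_mono) (use z(1) \<open>l < 0\<close> in \<open>force simp: sol_def\<close>)
  next
    fix e :: real assume "0 < e"
    then obtain m where "m \<in> terminal_values C" "s - e / 2 < m"
      using less_cSupD[OF nonempty, of "s - e / 2"] s by auto
    then obtain zm where zm: "pos_sol_on Q H C a b zm" "zm a = 0" "zm b = m"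
      by (auto simp: terminal_values_def)
    have "(zm \<longlongrightarrow> zm a) (at a within {a..b})"
      using zm(1) a_less_b by (simp add: pos_sol_on_def continuous_on_def)
    then have "(zm \<longlongrightarrow> 0) (at_right a)"
      using zm(2) a_less_b by (simp add: at_within_Icc_at_right)
    then have "\<forall>\<^sub>F x in at_right a. zm x < e / 2"
      using \<open>0 < e\<close> by (intro order_tendstoD) auto
    moreover have "\<forall>\<^sub>F x in at_right a. x \<in> {a<..<b}"
      using eventually_at_right_real[OF a_less_b] .
    ultimately show "\<forall>\<^sub>F x in at_right a. z x < e"
    proof eventually_elim
      case (elim x)
      then have x: "x \<in> {a<..b}"
        by auto
      have "z x \<le> zm x + max 0 (s - m)"
      proof (cases "s \<le> m")
        case True
        then show ?thesis
          using sol_le_if_terminal_le[OF z(1) sol_if_pos_sol_on[OF zm(1)] _ x] z(2) zm(3) by simp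
      next
        case False
        then show ?thesis
          using sol_le_if_terminal_le[OF sol_if_pos_sol_on[OF zm(1)] z(1) _ x] z(2) zm(3) by simp
      qed
      then show ?case
        using elim \<open>s - e / 2 < m\<close> \<open>0 < e\<close> by (auto simp: max_def split: if_splits)
    qed
  qed
  then show ?thesis
    using terminal_valuesI[OF z(1)] z(2) by simp
qed

text \<open>If the constant of \<open>- \<zeta>\<close> were smaller than \<open>C\<close>, the gap \<open>- \<zeta> - z\<close> would be positive at \<open>a\<close>
  and negative at \<open>b\<close>, although it increases wherever it is nonnegative.\<close>

lemma le_threshold_if_pos_sol_on:
  assumes z: "pos_sol_on Q H C a b z" and "z a = 0" "0 < z b"
  shows "ereal C \<le> threshold"
proof -
  have c_le: "c \<le> - C" if \<zeta>: "zeta_sol Q (\<lambda>x. - H x) a b c \<zeta>" "\<zeta> a < 0" for c \<zeta>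
  proof (rule ccontr)
    assume "\<not> c \<le> - C"
    define w where "w = (\<lambda>x. - \<zeta> x)"
    have w: "pos_sol_on Q H (- c) a b w" "w b = 0"
      using \<zeta>(1) by (simp_all add: zeta_sol_iff_pos_sol_on w_def)
    have w_less: "w y < z y" if y: "y \<in> {a<..<b}" for y
    proof (rule ccontr)
      assume "\<not> w y < z y"
      then have "(w y - z y) + (C - - c) * (b - y) \<le> w b - z b"
        using y \<open>\<not> c \<le> - C\<close>
        by (intro sol_gap_grows[OF sol_if_pos_sol_on[OF w(1)] sol_if_pos_sol_on[OF z]]) auto
      moreover have "0 < (C - - c) * (b - y)"
        using y \<open>\<not> c \<le> - C\<close> by simp
      ultimately show False
        using \<open>\<not> w y < z y\<close> w(2) \<open>0 < z b\<close> by linarith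
    qed
    have "(z \<longlongrightarrow> z a) (at a within {a..b})" "(w \<longlongrightarrow> w a) (at a within {a..b})"
      using z w(1) a_less_b by (simp_all add: pos_sol_on_def continuous_on_def)
    then have gap_lim: "((\<lambda>x. z x - w x) \<longlongrightarrow> z a - w a) (at_right a)"
      using a_less_b by (simp add: at_within_Icc_at_right tendsto_diff)
    have gap_nonneg: "\<forall>\<^sub>F x in at_right a. 0 \<le> z x - w x"
      using eventually_at_right_real[OF a_less_b]
      by (rule eventually_mono) (use w_less in force)
    have "0 \<le> z a - w a"
      using tendsto_lowerbound[OF gap_lim gap_nonneg] by simp
    then show False
      using \<open>z a = 0\<close> \<zeta>(2) by (simp add: w_def)
  qed
  have "cstar Q (\<lambda>x. - H x) a b \<le> ereal (- C)"
    unfolding cstar_def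
  proof (rule Sup_least)
    fix v assume "v \<in> {ereal c | c. \<exists>\<zeta>. zeta_sol Q (\<lambda>x. - H x) a b c \<zeta> \<and> \<zeta> a < 0}"
    then show "v \<le> ereal (- C)"
      using c_le by auto
  qed
  then have "- ereal (- C) \<le> - cstar Q (\<lambda>x. - H x) a b"
    by (simp only: ereal_minus_le_minus)
  then show ?thesis
    unfolding threshold_def by simp
qed

end

section \<open>Problem (P3)\<close>

locale p3_setting =
  fixes \<alpha> \<gamma> :: real and q h :: "real \<Rightarrow> real"
  assumes \<alpha>_less_\<gamma>: "\<alpha> < \<gamma>" and \<gamma>_less_1: "\<gamma> < 1"
    and q_cont: "continuous_on {\<alpha>..1} q" and h_cont: "continuous_on {\<alpha>..1} h"
    and q_pos: "\<And>x. x \<in> {\<alpha><..<\<gamma>} \<Longrightarrow> 0 < q x"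
    and q_neg: "\<And>x. x \<in> {\<gamma><..<1} \<Longrightarrow> q x < 0"
begin

sublocale left: reciprocal_ode \<alpha> \<gamma> q h
proof
  show "continuous_on {\<alpha>..\<gamma>} q" "continuous_on {\<alpha>..\<gamma>} h"
    using q_cont h_cont \<gamma>_less_1 by (auto elim: continuous_on_subset)
qed (use \<alpha>_less_\<gamma> q_pos in auto)

sublocale right: reciprocal_ode 0 "1 - \<gamma>" "\<lambda>\<phi>. - q (1 - \<phi>)" "\<lambda>\<phi>. - h (1 - \<phi>)"
proof
  have reflect_cont: "continuous_on {0..1 - \<gamma>} (\<lambda>\<phi>::real. 1 - \<phi>)"
    by (intro continuous_on_diff continuous_on_const continuous_on_id)
  have reflect_image: "(\<lambda>\<phi>. 1 - \<phi>) ` {0..1 - \<gamma>} \<subseteq> {\<alpha>..1}"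
    using \<alpha>_less_\<gamma> by auto
  show "continuous_on {0..1 - \<gamma>} (\<lambda>\<phi>. - q (1 - \<phi>))" "continuous_on {0..1 - \<gamma>} (\<lambda>\<phi>. - h (1 - \<phi>))"
    by (intro continuous_on_minus continuous_on_compose2[OF _ reflect_cont reflect_image] q_cont h_cont)+
qed (use \<gamma>_less_1 q_neg in auto)

lemma right_terminal_values:
  "right.terminal_values (- c) = {z \<gamma> | z. pos_sol_on q h c \<gamma> 1 z \<and> z 1 = 0}"
proof -
  have reflect: "pos_sol_on (\<lambda>\<phi>. - q (1 - \<phi>)) (\<lambda>\<phi>. - h (1 - \<phi>)) (- c) 0 (1 - \<gamma>) (\<lambda>\<phi>. z (1 - \<phi>))"
    if "pos_sol_on q h c \<gamma> 1 z" for z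
    using pos_sol_on_reflect[OF that] by simp
  have reflect_back: "pos_sol_on q h c \<gamma> 1 (\<lambda>x. y (1 - x))"
    if "pos_sol_on (\<lambda>\<phi>. - q (1 - \<phi>)) (\<lambda>\<phi>. - h (1 - \<phi>)) (- c) 0 (1 - \<gamma>) y" for y
    using pos_sol_on_reflect[OF that] by simp
  show ?thesis
    unfolding right.terminal_values_def
  proof (intro set_eqI iffI)
    fix v assume "v \<in> {z (1 - \<gamma>) | z. pos_sol_on (\<lambda>\<phi>. - q (1 - \<phi>)) (\<lambda>\<phi>. - h (1 - \<phi>)) (- c) 0 (1 - \<gamma>) z \<and> z 0 = 0}"
    then obtain y where "pos_sol_on (\<lambda>\<phi>. - q (1 - \<phi>)) (\<lambda>\<phi>. - h (1 - \<phi>)) (- c) 0 (1 - \<gamma>) y"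
      "y 0 = 0" "v = y (1 - \<gamma>)"
      by blast
    then show "v \<in> {z \<gamma> | z. pos_sol_on q h c \<gamma> 1 z \<and> z 1 = 0}"
      using reflect_back by (intro CollectI exI[of _ "\<lambda>x. y (1 - x)"]) simp
  next
    fix v assume "v \<in> {z \<gamma> | z. pos_sol_on q h c \<gamma> 1 z \<and> z 1 = 0}"
    then obtain z where "pos_sol_on q h c \<gamma> 1 z" "z 1 = 0" "v = z \<gamma>"
      by blast
    then show "v \<in> {z (1 - \<gamma>) | z. pos_sol_on (\<lambda>\<phi>. - q (1 - \<phi>)) (\<lambda>\<phi>. - h (1 - \<phi>)) (- c) 0 (1 - \<gamma>) z \<and> z 0 = 0}"
      using reflect by (intro CollectI exI[of _ "\<lambda>\<phi>. z (1 - \<phi>)"]) simp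
  qed
qed

lemma cstar31_eq: "cstar31 q h \<alpha> \<gamma> = left.threshold"
  by (simp add: cstar31_def left.threshold_def)

lemma cstar32_eq: "cstar32 q h \<gamma> = - right.threshold"
  by (simp add: cstar32_def right.threshold_def)

lemma beta1_eq: "beta1 q h \<alpha> \<gamma> c = Sup (left.terminal_values c)"
  by (simp add: beta1_def left.terminal_values_def)

lemma beta2_eq: "beta2 q h \<gamma> c = Sup (right.terminal_values (- c))"
  by (simp add: beta2_def right_terminal_values)

lemma below_thresholds:
  assumes "cstar32 q h \<gamma> < ereal c" "ereal c < cstar31 q h \<alpha> \<gamma>"
  shows "ereal c < left.threshold" "ereal (- c) < right.threshold"
  using assms by (simp_all add: cstar31_eq cstar32_eq ereal_uminus_less_reorder)

lemma min_beta_pos: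
  assumes "cstar32 q h \<gamma> < ereal c" "ereal c < cstar31 q h \<alpha> \<gamma>"
  shows "0 < min (beta1 q h \<alpha> \<gamma> c) (beta2 q h \<gamma> c)"
proof -
  obtain s1 s2 where "s1 \<in> left.terminal_values c" "0 < s1"
    and "s2 \<in> right.terminal_values (- c)" "0 < s2"
    using left.positive_terminal_value_exists right.positive_terminal_value_exists
      below_thresholds[OF assms] by blast
  then show ?thesis
    using cSup_upper[OF _ left.terminal_values_bdd_above] cSup_upper[OF _ right.terminal_values_bdd_above]
    by (force simp: beta1_eq beta2_eq)
qed

text \<open>Solutions of the two half problems with the same value at \<open>\<gamma>\<close> glue to a solution of (P3).\<close>

lemma P3_solution_exists:
  assumes "cstar32 q h \<gamma> < ereal c" "ereal c < cstar31 q h \<alpha> \<gamma>"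
    and "0 < s" "s \<le> min (beta1 q h \<alpha> \<gamma> c) (beta2 q h \<gamma> c)"
  shows "\<exists>z. P3 q h \<alpha> c z \<and> z \<gamma> = s"
proof -
  have "s \<in> left.terminal_values c"
    using assms below_thresholds[OF assms(1,2)] by (intro left.terminal_values_interval) (auto simp: beta1_eq)
  then obtain z1 where z1: "pos_sol_on q h c \<alpha> \<gamma> z1" "z1 \<alpha> = 0" "z1 \<gamma> = s"
    by (auto simp: left.terminal_values_def)
  have "s \<in> right.terminal_values (- c)"
    using assms below_thresholds[OF assms(1,2)] by (intro right.terminal_values_interval) (auto simp: beta2_eq)
  then obtain z2 where z2: "pos_sol_on q h c \<gamma> 1 z2" "z2 1 = 0" "z2 \<gamma> = s"
    by (auto simp: right_terminal_values)
  have "pos_sol_on q h c \<alpha> 1 (\<lambda>x. if x \<le> \<gamma> then z1 x else z2 x)"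
    using z1 z2 \<open>0 < s\<close> by (intro pos_sol_on_glue[OF \<alpha>_less_\<gamma> \<gamma>_less_1 h_cont q_cont]) auto
  then show ?thesis
    using z1 z2 \<alpha>_less_\<gamma> \<gamma>_less_1 by (intro exI[of _ "\<lambda>x. if x \<le> \<gamma> then z1 x else z2 x"]) (simp add: P3_def)
qed

lemma P3_solution_bounds:
  assumes "P3 q h \<alpha> c z"
  shows "cstar32 q h \<gamma> \<le> ereal c" "ereal c \<le> cstar31 q h \<alpha> \<gamma>"
proof -
  have z: "pos_sol_on q h c \<alpha> 1 z" "z \<alpha> = 0" "z 1 = 0"
    using assms by (auto simp: P3_def)
  have "0 < z \<gamma>"
    using pos_sol_onD(1)[OF z(1)] \<alpha>_less_\<gamma> \<gamma>_less_1 by auto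
  have "pos_sol_on q h c \<alpha> \<gamma> z"
    by (rule pos_sol_on_subinterval[OF z(1)]) (use \<alpha>_less_\<gamma> \<gamma>_less_1 in auto)
  then show "ereal c \<le> cstar31 q h \<alpha> \<gamma>"
    unfolding cstar31_eq using z(2) \<open>0 < z \<gamma>\<close> by (rule left.le_threshold_if_pos_sol_on)
  have "pos_sol_on q h c \<gamma> 1 z"
    by (rule pos_sol_on_subinterval[OF z(1)]) (use \<alpha>_less_\<gamma> \<gamma>_less_1 in auto)
  then have "z \<gamma> \<in> right.terminal_values (- c)"
    using z(3) by (auto simp: right_terminal_values)
  then obtain y where y: "pos_sol_on (\<lambda>\<phi>. - q (1 - \<phi>)) (\<lambda>\<phi>. - h (1 - \<phi>)) (- c) 0 (1 - \<gamma>) y"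
    "y 0 = 0" "y (1 - \<gamma>) = z \<gamma>"
    by (auto simp: right.terminal_values_def)
  have "ereal (- c) \<le> right.threshold"
    by (rule right.le_threshold_if_pos_sol_on[OF y(1,2)]) (use y(3) \<open>0 < z \<gamma>\<close> in simp)
  then show "cstar32 q h \<gamma> \<le> ereal c"
    unfolding cstar32_eq by (simp add: ereal_uminus_le_reorder)
qed

lemma P3_solvability:
  "(\<forall>c::real. cstar32 q h \<gamma> < cstar31 q h \<alpha> \<gamma> \<and>
        cstar32 q h \<gamma> < ereal c \<and> ereal c < cstar31 q h \<alpha> \<gamma> \<longrightarrow>
        (\<exists>z. P3 q h \<alpha> c z) \<and>
        (\<forall>s\<in>{0<..min (beta1 q h \<alpha> \<gamma> c) (beta2 q h \<gamma> c)}. \<exists>z. P3 q h \<alpha> c z \<and> z \<gamma> = s))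
   \<and> (\<forall>c::real. (\<exists>z. P3 q h \<alpha> c z) \<longrightarrow>
        cstar32 q h \<gamma> \<le> cstar31 q h \<alpha> \<gamma> \<and>
        cstar32 q h \<gamma> \<le> ereal c \<and> ereal c \<le> cstar31 q h \<alpha> \<gamma>)"
proof (intro conjI allI impI)
  fix c assume c: "cstar32 q h \<gamma> < cstar31 q h \<alpha> \<gamma> \<and>
    cstar32 q h \<gamma> < ereal c \<and> ereal c < cstar31 q h \<alpha> \<gamma>"
  then show family: "\<forall>s\<in>{0<..min (beta1 q h \<alpha> \<gamma> c) (beta2 q h \<gamma> c)}. \<exists>z. P3 q h \<alpha> c z \<and> z \<gamma> = s"
    using P3_solution_exists by auto
  have "min (beta1 q h \<alpha> \<gamma> c) (beta2 q h \<gamma> c) \<in> {0<..min (beta1 q h \<alpha> \<gamma> c) (beta2 q h \<gamma> c)}"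
    using min_beta_pos c by simp
  with family show "\<exists>z. P3 q h \<alpha> c z"
    by blast
next
  fix c assume "\<exists>z. P3 q h \<alpha> c z"
  then show "cstar32 q h \<gamma> \<le> ereal c" "ereal c \<le> cstar31 q h \<alpha> \<gamma>"
    using P3_solution_bounds by blast+
  then show "cstar32 q h \<gamma> \<le> cstar31 q h \<alpha> \<gamma>"
    by (rule order.trans)
qed

end

theorem lemma4p9:
  fixes \<alpha> \<gamma> :: real and f h D D' g q :: "real \<Rightarrow> real"
  assumes "0 < \<alpha>" "\<alpha> < \<gamma>" "\<gamma> < 1"
    and f_C1: "\<forall>x\<in>{0..1}. (f has_real_derivative h x) (at x within {0..1})"
    and h_cont: "continuous_on {0..1} h"
    and f0: "f 0 = 0"
    and D_C1: "\<forall>x\<in>{0..1}. (D has_real_derivative D' x) (at x within {0..1})"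
    and D'_cont: "continuous_on {0..1} D'"
    and D_pos: "\<forall>x\<in>{0<..<\<alpha>}. D x > 0"
    and D_neg: "\<forall>x\<in>{\<alpha><..<1}. D x < 0"
    and g_cont: "continuous_on {0..1} g"
    and g_neg: "\<forall>x\<in>{0<..<\<gamma>}. g x < 0"
    and g_pos: "\<forall>x\<in>{\<gamma><..<1}. g x > 0"
    and g_zeros: "g 0 = 0" "g \<gamma> = 0" "g 1 = 0"
    and q_def: "q = (\<lambda>x. D x * g x)"
  shows "(\<forall>c::real. cstar32 q h \<gamma> < cstar31 q h \<alpha> \<gamma> \<and>
            cstar32 q h \<gamma> < ereal c \<and> ereal c < cstar31 q h \<alpha> \<gamma> \<longrightarrow>
            (\<exists>z. P3 q h \<alpha> c z) \<and>
            (\<forall>s\<in>{0<..min (beta1 q h \<alpha> \<gamma> c) (beta2 q h \<gamma> c)}.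
               \<exists>z. P3 q h \<alpha> c z \<and> z \<gamma> = s))
       \<and> (\<forall>c::real. (\<exists>z. P3 q h \<alpha> c z) \<longrightarrow>
            cstar32 q h \<gamma> \<le> cstar31 q h \<alpha> \<gamma> \<and>
            cstar32 q h \<gamma> \<le> ereal c \<and> ereal c \<le> cstar31 q h \<alpha> \<gamma>)"
proof -
  have "continuous_on {0..1} D"
    using D_C1 by (intro DERIV_continuous_on) auto
  then have "continuous_on {\<alpha>..1} q"
    unfolding q_def using g_cont \<open>0 < \<alpha>\<close> by (intro continuous_on_mult) (auto elim: continuous_on_subset)
  moreover have "continuous_on {\<alpha>..1} h"
    using h_cont \<open>0 < \<alpha>\<close> by (auto elim: continuous_on_subset)
  moreover have "0 < q x" if "x \<in> {\<alpha><..<\<gamma>}" for x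
    using D_neg g_neg that assms(1-3) by (simp add: q_def mult_neg_neg)
  moreover have "q x < 0" if "x \<in> {\<gamma><..<1}" for x
    using D_neg g_pos that assms(2) by (simp add: q_def mult_neg_pos)
  ultimately interpret p3_setting \<alpha> \<gamma> q h
    using assms(2,3) by unfold_locales auto
  show ?thesis
    by (rule P3_solvability)
qed

end
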